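(* Let $G$ be the path on $k$ vertices and $n\ge 1$. Then $$W(\Gamma^G_n)=\frac{(k-1)^2(2k^2-2k-1)}{k^3(2k-1)}\,2^nk^{2n}+\frac{(k-1)(k-2)(k-3)}{3k^2}\,nk^{2n}-\frac{(k+1)(k-2)(k^2+2k-6)}{6k^3}\,k^{2n}+\frac{(k+1)(k-2)(2k-5)}{6k(2k-1)}\,k^n .$$
   Context: Let $G=(V,E)$ be a finite tree with vertex set $V$ of size $k$, and fix an orientation of each edge, so that each edge becomes an ordered pair $e=(s,t)$. Each oriented edge $e=(s,t)$ acts on the set $V^*$ of finite words over the alphabet $V$ by the recursive rule: $e(\emptyset)=\emptyset$, $e(sw)=t\,e(w)$, $e(tw)=sw$, and $e(xw)=xw$ for $x\in V\setminus\{s,t\}$ (words are read left to right, $w\in V^*$). This action preserves word length. For $n\ge 1$, the Schreier graph $\Gamma_n^G$ is the multigraph with vertex set $V^n$ having, for each $u\in V^n$ and each oriented edge $e$ of $G$, one edge joining $u$ and $e(u)$, labelled $e$ (a loop if $e(u)=u$). For a connected graph $H$, the Wiener index is $W(H)=\sum_{\{u,v\}}d_H(u,v)$ over unordered pairs of vertices. *)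

theory Defs
  imports Complex_Main
begin

fun edge_act :: "nat \<times> nat \<Rightarrow> nat list \<Rightarrow> nat list" where
  "edge_act (s, t) [] = []"
| "edge_act (s, t) (x # w) =
     (if x = s then t # edge_act (s, t) w
      else if x = t then s # w
      else x # w)"

definition words :: "nat set \<Rightarrow> nat \<Rightarrow> nat list set" where
  "words V n = {w. length w = n \<and> set w \<subseteq> V}"

text \<open>Adjacency relation (undirected, loops irrelevant for distances) of the
  Schreier graph Gamma_n for the oriented edge set E over vertex set V.\<close>
definition schreier_adj :: "nat set \<Rightarrow> (nat \<times> nat) set \<Rightarrow> nat \<Rightarrow> (nat list \<times> nat list) set" where
  "schreier_adj V E n =
     {(u, edge_act e u) | u e. u \<in> words V n \<and> e \<in> E}
     \<union> {(edge_act e u, u) | u e. u \<in> words V n \<and> e \<in> E}"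

definition graph_dist :: "('a \<times> 'a) set \<Rightarrow> 'a \<Rightarrow> 'a \<Rightarrow> nat" where
  "graph_dist R u v = (LEAST m. (u, v) \<in> R ^^ m)"

text \<open>Wiener index: sum of distances over unordered pairs of distinct vertices
  (= half the sum over ordered pairs, since d(u,u) = 0).\<close>
definition wiener :: "'a set \<Rightarrow> ('a \<times> 'a) set \<Rightarrow> real" where
  "wiener Vs R = real (\<Sum>u\<in>Vs. \<Sum>v\<in>Vs. graph_dist R u v) / 2"

definition path_edges :: "nat \<Rightarrow> (nat \<Rightarrow> bool) \<Rightarrow> (nat \<times> nat) set" where
  "path_edges k orient = {(if orient i then (i, i + 1) else (i + 1, i)) | i. i + 1 < k}"

end

(*
  The edge {i, i+1} of the path acts on a word only through its maximal prefix p over the letters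
  i and i+1: reading p as a binary number (least significant digit first, digit 1 for i+1), the
  two orientations of the edge add or subtract 1 modulo 2^|p|. So the orbits of the edges are the
  cycles {p @ \<tau> | p \<in> {i, i+1}^j} of length 2^j, every word lies on exactly one cycle of
  each edge, and the Schreier graph is a cactus: the distance between u and w is the sum, over all
  cycles, of the cyclic distance between the points at which u and w are attached to the cycle.
  Summed over all pairs of words, the contribution of a cycle only depends on how the k^n words
  project onto it; these projections are explicit, and geometric sums give the closed form.
*)
theory Submission
  imports Defs
begin

section \<open>Distances on a cycle\<close>

definition absdiff :: "nat \<Rightarrow> nat \<Rightarrow> nat" where
  "absdiff x y = (if x \<le> y then y - x else x - y)"

definition cyc_dist :: "nat \<Rightarrow> nat \<Rightarrow> nat \<Rightarrow> nat" where
  "cyc_dist M x y = min (absdiff x y) (M - absdiff x y)"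

definition cyc_succ :: "nat \<Rightarrow> nat \<Rightarrow> nat" where
  "cyc_succ M x = (if Suc x = M then 0 else Suc x)"

definition cyc_pred :: "nat \<Rightarrow> nat \<Rightarrow> nat" where
  "cyc_pred M x = (if x = 0 then M - 1 else x - 1)"

lemma cyc_dist_self [simp]: "cyc_dist M x x = 0"
  by (simp add: cyc_dist_def absdiff_def)

lemma cyc_dist_commute: "cyc_dist M x y = cyc_dist M y x"
  by (simp add: cyc_dist_def absdiff_def)

lemma cyc_dist_succ_le: "x < M \<Longrightarrow> z < M \<Longrightarrow> cyc_dist M (cyc_succ M x) z \<le> cyc_dist M x z + 1"
  unfolding cyc_dist_def absdiff_def cyc_succ_def min_def by (simp split: if_split) (intro conjI impI; arith)

lemma cyc_succ_pred: "x < M \<Longrightarrow> cyc_succ M (cyc_pred M x) = x"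
  unfolding cyc_succ_def cyc_pred_def by auto

lemma cyc_dist_pred_le: "x < M \<Longrightarrow> z < M \<Longrightarrow> cyc_dist M (cyc_pred M x) z \<le> cyc_dist M x z + 1"
proof -
  assume "x < M" "z < M"
  moreover have "cyc_pred M x < M" using \<open>x < M\<close> unfolding cyc_pred_def by auto
  ultimately have "cyc_dist M (cyc_pred M x) z \<le> cyc_dist M (cyc_succ M (cyc_pred M x)) z + 1"
    unfolding cyc_dist_def absdiff_def cyc_succ_def min_def by (simp split: if_split) (intro conjI impI; arith)
  then show ?thesis using cyc_succ_pred[OF \<open>x < M\<close>] by simp
qed

lemma cyc_dist_descent:
  assumes "x < M" "z < M" "x \<noteq> z"
  shows "cyc_dist M (cyc_succ M x) z + 1 = cyc_dist M x z \<or> cyc_dist M (cyc_pred M x) z + 1 = cyc_dist M x z"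
proof (cases "x < z")
  case True
  show ?thesis
  proof (cases "2 * (z - x) \<le> M")
    case le: True
    have "cyc_succ M x = x + 1" using \<open>x < z\<close> assms unfolding cyc_succ_def by auto
    then have "cyc_dist M (cyc_succ M x) z + 1 = cyc_dist M x z"
      unfolding cyc_dist_def absdiff_def min_def using le \<open>x < z\<close>
      by (simp split: if_split) (intro conjI impI; arith)
    then show ?thesis ..
  next
    case False
    have "cyc_dist M (cyc_pred M x) z + 1 = cyc_dist M x z"
      unfolding cyc_pred_def cyc_dist_def absdiff_def min_def using False \<open>x < z\<close> assms
      by (simp split: if_split) (intro conjI impI; arith)
    then show ?thesis ..
  qed
next
  case False
  then have "z < x" using assms by auto
  show ?thesis
  proof (cases "2 * (x - z) \<le> M")
    case le: True
    have "cyc_pred M x = x - 1" using \<open>z < x\<close> unfolding cyc_pred_def by auto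
    then have "cyc_dist M (cyc_pred M x) z + 1 = cyc_dist M x z"
      unfolding cyc_dist_def absdiff_def min_def using le \<open>z < x\<close>
      by (simp split: if_split) (intro conjI impI; arith)
    then show ?thesis ..
  next
    case False
    have "cyc_dist M (cyc_succ M x) z + 1 = cyc_dist M x z"
      unfolding cyc_succ_def cyc_dist_def absdiff_def min_def using False \<open>z < x\<close> assms
      by (simp split: if_split) (intro conjI impI; arith)
    then show ?thesis ..
  qed
qed

lemma cyc_dist_double:
  assumes "x < M" "y < M"
  shows "cyc_dist (2 * M) x y = absdiff x y"
    and "cyc_dist (2 * M) (x + M) (y + M) = absdiff x y"
    and "cyc_dist (2 * M) x (y + M) = M - absdiff x y"
    and "cyc_dist (2 * M) (x + M) y = M - absdiff x y"
  using assms unfolding cyc_dist_def absdiff_def min_def by auto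

lemma cyc_dist_double_top:
  assumes "y < M"
  shows "cyc_dist (2 * M) (2 * M - 1) y = y + 1"
    and "cyc_dist (2 * M) y (2 * M - 1) = y + 1"
    and "cyc_dist (2 * M) (2 * M - 1) (y + M) = M - 1 - y"
    and "cyc_dist (2 * M) (y + M) (2 * M - 1) = M - 1 - y"
  using assms unfolding cyc_dist_def absdiff_def min_def by auto

lemma length_words: "w \<in> words V n \<Longrightarrow> length w = n"
  unfolding words_def by simp

lemma finite_words: "finite V \<Longrightarrow> finite (words V n)"
  using finite_lists_length_eq[of V n] unfolding words_def by (simp add: conj_commute)

lemma card_words: "finite V \<Longrightarrow> card (words V n) = card V ^ n"
  using card_lists_length_eq[of V n] unfolding words_def by (simp add: conj_commute)

lemma words_0: "words V 0 = {[]}"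
  unfolding words_def by auto

lemma words_snoc_bij: "bij_betw (\<lambda>(q, a). q @ [a]) (words V j \<times> V) (words V (Suc j))"
proof (rule bij_betwI')
  show "(case x of (q, a) \<Rightarrow> q @ [a]) \<in> words V (Suc j)" if "x \<in> words V j \<times> V" for x
    using that unfolding words_def by auto
  show "\<exists>x\<in>words V j \<times> V. y = (case x of (q, a) \<Rightarrow> q @ [a])" if y: "y \<in> words V (Suc j)" for y
  proof -
    obtain q a where "y = q @ [a]" using y unfolding words_def by (cases y rule: rev_exhaust) auto
    then show ?thesis using y unfolding words_def by auto
  qed
qed auto

lemma sum_words_snoc: "(\<Sum>x\<in>words V (Suc j). f x) = (\<Sum>q\<in>words V j. \<Sum>a\<in>V. f (q @ [a]))"
proof -
  have "(\<Sum>x\<in>words V (Suc j). f x) = (\<Sum>(q, a)\<in>words V j \<times> V. f (q @ [a]))"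
    using sum.reindex_bij_betw[OF words_snoc_bij, of f V j] by (simp add: split_def)
  then show ?thesis by (simp add: sum.cartesian_product)
qed

lemma card_words_hd_in:
  assumes V: "finite V" and S: "S \<subseteq> V"
  shows "card {\<tau> \<in> words V (Suc m). hd \<tau> \<in> S} = card S * card V ^ m"
proof -
  have "{\<tau> \<in> words V (Suc m). hd \<tau> \<in> S} = (\<lambda>(a, r). a # r) ` (S \<times> words V m)"
  proof
    show "{\<tau> \<in> words V (Suc m). hd \<tau> \<in> S} \<subseteq> (\<lambda>(a, r). a # r) ` (S \<times> words V m)"
    proof
      fix \<tau> assume h: "\<tau> \<in> {\<tau> \<in> words V (Suc m). hd \<tau> \<in> S}"
      then obtain a r where "\<tau> = a # r" unfolding words_def by (cases \<tau>) auto
      then show "\<tau> \<in> (\<lambda>(a, r). a # r) ` (S \<times> words V m)" using h unfolding words_def by force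
    qed
    show "(\<lambda>(a, r). a # r) ` (S \<times> words V m) \<subseteq> {\<tau> \<in> words V (Suc m). hd \<tau> \<in> S}"
      using S unfolding words_def by auto
  qed
  moreover have "inj_on (\<lambda>(a, r). a # r) (S \<times> words V m)" by (rule inj_onI) auto
  moreover have "finite S" using S V finite_subset by blast
  ultimately show ?thesis using V by (simp add: card_image card_cartesian_product card_words)
qed

section \<open>Projection onto the cycles of an edge\<close>

text \<open>For \<open>q \<in> {i, i+1}^j\<close>, \<open>edge_proj i q\<close> is the position of \<open>q\<close> on its cycle:
  the binary number with least significant digit first and digit 1 for the letter \<open>i+1\<close>.
  Any other word is sent to the point through which it is attached to that cycle: all letters up
  to the last one outside \<open>{i, i+1}\<close> count as \<open>i\<close> if that letter is below \<open>i\<close>, and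
  as \<open>i+1\<close> otherwise.\<close>

fun edge_proj :: "nat \<Rightarrow> nat list \<Rightarrow> nat" where
  "edge_proj i [] = 0"
| "edge_proj i (a # q) =
     (if set q \<subseteq> {i, Suc i} then (if i < a then 1 else 0) else edge_proj i q mod 2)
     + 2 * edge_proj i q"

lemma edge_proj_less: "edge_proj i q < 2 ^ length q"
  by (induction q) (auto split: if_splits)

lemma edge_proj_append_inside:
  "set s \<subseteq> {i, Suc i} \<Longrightarrow> edge_proj i (p @ s) = edge_proj i p + 2 ^ length p * edge_proj i s"
proof (induction p)
  case (Cons a p)
  have "edge_proj i (p @ s) mod 2 = edge_proj i p mod 2" if np: "\<not> set p \<subseteq> {i, Suc i}"
  proof -
    obtain b r where "p = b # r" using np by (cases p) auto
    then have "edge_proj i (p @ s) = edge_proj i p + 2 * (2 ^ length r * edge_proj i s)"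
      using Cons by simp
    then show ?thesis by simp
  qed
  with Cons show ?case by (auto simp: algebra_simps)
qed simp

lemma edge_proj_append_outside:
  "\<not> set s \<subseteq> {i, Suc i} \<Longrightarrow>
   edge_proj i (p @ s) = (if odd (edge_proj i s) then 2 ^ length p - 1 else 0) + 2 ^ length p * edge_proj i s"
proof (induction p)
  case (Cons a p)
  obtain M where M: "(2::nat) ^ length p = Suc M" by (cases "(2::nat) ^ length p") auto
  have "odd (edge_proj i (p @ s)) \<longleftrightarrow> odd (edge_proj i s)"
  proof (cases p)
    case (Cons b r)
    then have "edge_proj i (p @ s) = (if odd (edge_proj i s) then 2 * 2 ^ length r - 1 else 0)
        + 2 * (2 ^ length r * edge_proj i s)"
      using Cons.IH Cons.prems by simp
    moreover have "odd (2 * 2 ^ length r - 1 :: nat)" by simp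
    ultimately show ?thesis by auto
  qed simp
  with Cons M show ?case by (auto simp: algebra_simps odd_iff_mod_2_eq_one)
qed simp

lemma edge_proj_foreign:
  "set q \<subseteq> {i', Suc i'} \<Longrightarrow> i' \<noteq> i \<Longrightarrow> edge_proj i q = (if i' < i then 0 else 2 ^ length q - 1)"
proof (induction q)
  case (Cons a q)
  obtain M where M: "(2::nat) ^ length q = Suc M" by (cases "(2::nat) ^ length q") auto
  have "odd (2 ^ length q - 1 :: nat)" if "x \<in> set q" for x using that by (cases q) auto
  with Cons M show ?case by (auto simp: odd_iff_mod_2_eq_one)
qed simp

lemma edge_proj_eq_0_iff: "set q \<subseteq> {i, Suc i} \<Longrightarrow> edge_proj i q = 0 \<longleftrightarrow> set q \<subseteq> {i}"
  by (induction q) auto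

lemma edge_proj_eq_max_iff:
  "set q \<subseteq> {i, Suc i} \<Longrightarrow> edge_proj i q = 2 ^ length q - 1 \<longleftrightarrow> set q \<subseteq> {Suc i}"
proof (induction q)
  case (Cons a q)
  obtain M where M: "(2::nat) ^ length q = Suc M" by (cases "(2::nat) ^ length q") auto
  have "edge_proj i q \<le> M" using edge_proj_less[of i q] M by simp
  with Cons M show ?case by auto
qed simp

text \<open>Position of \<open>q @ [a]\<close> on a cycle of length \<open>2 * M\<close>, given the position \<open>x\<close> of \<open>q\<close>
  on the cycle of length \<open>M\<close>.\<close>

definition snoc_pos :: "nat \<Rightarrow> nat \<Rightarrow> nat \<Rightarrow> nat \<Rightarrow> nat" where
  "snoc_pos i M x a =
     (if a = i then x else if a = Suc i then x + M else if a < i then 0 else 2 * M - 1)"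

lemma edge_proj_snoc: "edge_proj i (q @ [a]) = snoc_pos i (2 ^ length q) (edge_proj i q) a"
proof (cases "a \<in> {i, Suc i}")
  case True
  then show ?thesis by (auto simp: edge_proj_append_inside snoc_pos_def)
next
  case False
  obtain M where "(2::nat) ^ length q = Suc M" by (cases "(2::nat) ^ length q") auto
  with False show ?thesis by (auto simp: edge_proj_append_outside snoc_pos_def)
qed

lemma length_edge_act [simp]: "length (edge_act (s, t) u) = length u"
  by (induction u) auto

lemma set_edge_act: "set (edge_act (s, t) u) \<subseteq> set u \<union> {s, t}"
  by (induction u) auto

lemma edge_act_append:
  "set p \<subseteq> {s, t} \<Longrightarrow> \<tau> = [] \<or> hd \<tau> \<notin> {s, t} \<Longrightarrow> edge_act (s, t) (p @ \<tau>) = edge_act (s, t) p @ \<tau>"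
proof (induction p)
  case Nil
  then show ?case by (cases \<tau>) auto
qed auto

lemma edge_act_reverse: "s \<noteq> t \<Longrightarrow> edge_act (t, s) (edge_act (s, t) u) = u"
  by (induction u) auto

lemma edge_proj_edge_act_succ:
  "set p \<subseteq> {i, Suc i} \<Longrightarrow>
   edge_proj i (edge_act (Suc i, i) p) = cyc_succ (2 ^ length p) (edge_proj i p)"
proof (induction p)
  case (Cons a p)
  have "set (edge_act (Suc i, i) p) \<subseteq> {i, Suc i}" using set_edge_act[of "Suc i" i p] Cons.prems by auto
  moreover have "edge_proj i p < 2 ^ length p" by (rule edge_proj_less)
  ultimately show ?case using Cons by (auto simp: cyc_succ_def)
qed (simp add: cyc_succ_def)

lemma edge_proj_edge_act_pred:
  assumes "set p \<subseteq> {i, Suc i}"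
  shows "edge_proj i (edge_act (i, Suc i) p) = cyc_pred (2 ^ length p) (edge_proj i p)"
proof -
  let ?v = "edge_act (i, Suc i) p"
  have "set ?v \<subseteq> {i, Suc i}" using set_edge_act[of i "Suc i" p] assms by auto
  then have "edge_proj i p = cyc_succ (2 ^ length p) (edge_proj i ?v)"
    using edge_proj_edge_act_succ[of ?v i] edge_act_reverse[of i "Suc i" p] by simp
  moreover have "edge_proj i ?v < 2 ^ length p" using edge_proj_less[of i ?v] by simp
  ultimately show ?thesis unfolding cyc_succ_def cyc_pred_def by auto
qed

section \<open>The Schreier graph as a cactus\<close>

text \<open>The cycle \<open>(i, j, \<tau>)\<close> consists of the words \<open>p @ \<tau>\<close> with \<open>p \<in> {i, i+1}^j\<close>, where
  \<open>\<tau>\<close> is empty or starts with a letter outside \<open>{i, i+1}\<close>. Words not ending in \<open>\<tau>\<close> are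
  attached to it at \<open>i^j @ \<tau>\<close> or at \<open>(i+1)^j @ \<tau>\<close>, depending on the first letter of
  \<open>\<tau>\<close> (for \<open>\<tau> = []\<close> every word of length \<open>j\<close> lies on the cycle, so the junk value
  \<open>hd []\<close> never matters).\<close>

definition outside_pos :: "nat \<Rightarrow> nat \<Rightarrow> nat list \<Rightarrow> nat" where
  "outside_pos i j \<tau> = (if hd \<tau> < i then 0 else 2 ^ j - 1)"

definition cycle_pos :: "nat \<Rightarrow> nat \<Rightarrow> nat list \<Rightarrow> nat list \<Rightarrow> nat" where
  "cycle_pos i j \<tau> w = (if drop j w = \<tau> then edge_proj i (take j w) else outside_pos i j \<tau>)"

lemma cycle_pos_less: "cycle_pos i j \<tau> w < 2 ^ j"
proof -
  have "edge_proj i (take j w) < 2 ^ length (take j w)" by (rule edge_proj_less)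
  also have "\<dots> \<le> 2 ^ j" by simp
  finally show ?thesis unfolding cycle_pos_def outside_pos_def by auto
qed

lemma cycle_pos_in_foreign_run:
  assumes p: "set p \<subseteq> {i', Suc i'}" and j: "j < length p" and \<tau>: "\<tau> = [] \<or> hd \<tau> \<notin> {i, Suc i}"
  shows "cycle_pos i j \<tau> (p @ \<sigma>) = outside_pos i j \<tau>"
proof (cases "drop j (p @ \<sigma>) = \<tau>")
  case True
  have "drop j (p @ \<sigma>) = drop j p @ \<sigma>" "drop j p \<noteq> []" using j by simp_all
  with True j have ne: "\<tau> \<noteq> []" and "hd \<tau> = p ! j" by (auto simp: hd_drop_conv_nth)
  then have hd: "hd \<tau> \<in> {i', Suc i'}" using p j by (metis nth_mem subsetD)
  with \<tau> ne have "i \<noteq> i'" by auto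
  moreover have "set (take j p) \<subseteq> {i', Suc i'}" using p set_take_subset by fast
  ultimately have "edge_proj i (take j p) = (if i' < i then 0 else 2 ^ j - 1)"
    using edge_proj_foreign[of "take j p" i' i] j by simp
  moreover have "outside_pos i j \<tau> = (if i' < i then 0 else 2 ^ j - 1)"
    using hd \<tau> ne unfolding outside_pos_def by auto
  ultimately show ?thesis using True j unfolding cycle_pos_def by simp
next
  case False
  then show ?thesis unfolding cycle_pos_def by (rule if_not_P)
qed

lemma cycle_pos_beyond_run:
  assumes p: "set p \<subseteq> {i', Suc i'}" and p': "set p' \<subseteq> {i', Suc i'}" and len: "length p' = length p"
    and \<sigma>: "\<sigma> = [] \<or> hd \<sigma> \<notin> {i', Suc i'}"
    and j: "length p \<le> j" "j \<le> length p + length \<sigma>" and other: "(i, j, \<tau>) \<noteq> (i', length p, \<sigma>)"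
  shows "cycle_pos i j \<tau> (p @ \<sigma>) = cycle_pos i j \<tau> (p' @ \<sigma>)"
proof -
  define \<rho> where "\<rho> = take (j - length p) \<sigma>"
  have drop: "drop j (p' @ \<sigma>) = drop j (p @ \<sigma>)" using j len by simp
  have take: "take j (p @ \<sigma>) = p @ \<rho>" "take j (p' @ \<sigma>) = p' @ \<rho>"
    using j len unfolding \<rho>_def by simp_all
  have "edge_proj i (p @ \<rho>) = edge_proj i (p' @ \<rho>)" if on: "drop j (p @ \<sigma>) = \<tau>"
  proof (cases "set \<rho> \<subseteq> {i, Suc i}")
    case inside: True
    have "edge_proj i p = edge_proj i p'"
    proof (cases "i = i'")
      case True
      have "\<rho> \<noteq> []"
      proof
        assume "\<rho> = []"
        with j have "j = length p" unfolding \<rho>_def by auto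
        with on True other show False by simp
      qed
      then have "hd \<rho> = hd \<sigma>" "\<sigma> \<noteq> []" unfolding \<rho>_def by auto
      moreover have "hd \<rho> \<in> {i, Suc i}" using inside \<open>\<rho> \<noteq> []\<close> hd_in_set by blast
      ultimately show ?thesis using \<sigma> True by simp
    next
      case False
      then show ?thesis using edge_proj_foreign[OF p, of i] edge_proj_foreign[OF p', of i] len by simp
    qed
    with inside len show ?thesis by (simp add: edge_proj_append_inside)
  next
    case False
    with len show ?thesis by (simp add: edge_proj_append_outside)
  qed
  then show ?thesis unfolding cycle_pos_def drop take by simp
qed

lemma cycle_pos_other_cycle:
  assumes "set p \<subseteq> {i', Suc i'}" "set p' \<subseteq> {i', Suc i'}" "length p' = length p"
    and "\<sigma> = [] \<or> hd \<sigma> \<notin> {i', Suc i'}" "\<tau> = [] \<or> hd \<tau> \<notin> {i, Suc i}"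
    and "j \<le> length p + length \<sigma>" "(i, j, \<tau>) \<noteq> (i', length p, \<sigma>)"
  shows "cycle_pos i j \<tau> (p @ \<sigma>) = cycle_pos i j \<tau> (p' @ \<sigma>)"
proof (cases "j < length p")
  case True
  have "cycle_pos i j \<tau> (p @ \<sigma>) = outside_pos i j \<tau>"
    by (rule cycle_pos_in_foreign_run) (use assms True in auto)
  moreover have "cycle_pos i j \<tau> (p' @ \<sigma>) = outside_pos i j \<tau>"
    by (rule cycle_pos_in_foreign_run) (use assms True in auto)
  ultimately show ?thesis by simp
next
  case False
  then show ?thesis by (intro cycle_pos_beyond_run) (use assms in auto)
qed

abbreviation edge_prefix :: "nat \<Rightarrow> nat list \<Rightarrow> nat list" where
  "edge_prefix i u \<equiv> takeWhile (\<lambda>x. x \<in> {i, Suc i}) u"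

abbreviation edge_suffix :: "nat \<Rightarrow> nat list \<Rightarrow> nat list" where
  "edge_suffix i u \<equiv> dropWhile (\<lambda>x. x \<in> {i, Suc i}) u"

lemma set_edge_prefix: "set (edge_prefix i u) \<subseteq> {i, Suc i}"
  by (auto dest: set_takeWhileD)

lemma edge_suffix_hd: "edge_suffix i u = [] \<or> hd (edge_suffix i u) \<notin> {i, Suc i}"
  using hd_dropWhile[of "\<lambda>x. x \<in> {i, Suc i}" u] by auto

definition cycles :: "nat \<Rightarrow> nat \<Rightarrow> (nat \<times> nat \<times> nat list) set" where
  "cycles k n = {(i, j, \<tau>). Suc i < k \<and> j \<le> n \<and> \<tau> \<in> words {0..<k} (n - j) \<and> (\<tau> = [] \<or> hd \<tau> \<notin> {i, Suc i})}"

definition cactus_dist :: "nat \<Rightarrow> nat \<Rightarrow> nat list \<Rightarrow> nat list \<Rightarrow> nat" where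
  "cactus_dist k n u w = (\<Sum>(i, j, \<tau>)\<in>cycles k n. cyc_dist (2 ^ j) (cycle_pos i j \<tau> u) (cycle_pos i j \<tau> w))"

lemma edge_act_words:
  "u \<in> words {0..<k} n \<Longrightarrow> Suc i < k \<Longrightarrow> {s, t} = {i, Suc i} \<Longrightarrow> edge_act (s, t) u \<in> words {0..<k} n"
  using set_edge_act[of s t u] unfolding words_def by (auto simp: doubleton_eq_iff)

lemma finite_cycles: "finite (cycles k n)"
proof (rule finite_subset)
  show "cycles k n \<subseteq> {..<k} \<times> {..n} \<times> (\<Union>m\<le>n. words {0..<k} m)"
    unfolding cycles_def by force
  show "finite ({..<k} \<times> {..n} \<times> (\<Union>m\<le>n. words {0..<k} m))"
    using finite_words by auto
qed

lemma own_cycle_mem_cycles: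
  assumes "u \<in> words {0..<k} n" "Suc i < k"
  shows "(i, length (edge_prefix i u), edge_suffix i u) \<in> cycles k n"
proof -
  have "length (edge_prefix i u) + length (edge_suffix i u) = n"
    using assms(1) length_words by (metis length_append takeWhile_dropWhile_id)
  moreover have "set (edge_suffix i u) \<subseteq> set u" by (auto dest: set_dropWhileD)
  ultimately show ?thesis
    using assms edge_suffix_hd[of i u] unfolding cycles_def words_def by auto
qed

lemma cactus_dist_self [simp]: "cactus_dist k n u u = 0"
  unfolding cactus_dist_def by simp

lemma cactus_dist_edge_act:
  fixes w :: "nat list"
  assumes u: "u \<in> words {0..<k} n" and i: "Suc i < k" and st: "{s, t} = {i, Suc i}"
  defines "p \<equiv> edge_prefix i u"
    and "z \<equiv> cycle_pos i (length (edge_prefix i u)) (edge_suffix i u) w"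
  shows "cactus_dist k n (edge_act (s, t) u) w + cyc_dist (2 ^ length p) (edge_proj i p) z
       = cactus_dist k n u w + cyc_dist (2 ^ length p) (edge_proj i (edge_act (s, t) p)) z"
proof -
  define \<sigma> where "\<sigma> = edge_suffix i u"
  define own where "own = (i, length p, \<sigma>)"
  define v where "v = edge_act (s, t) u"
  define contrib where "contrib x c = (case c of (i', j, \<tau>) \<Rightarrow> cyc_dist (2 ^ j) (cycle_pos i' j \<tau> x) (cycle_pos i' j \<tau> w))"
    for x c
  have u_split: "u = p @ \<sigma>" unfolding p_def \<sigma>_def by simp
  have p: "set p \<subseteq> {i, Suc i}" unfolding p_def by (rule set_edge_prefix)
  have p': "set (edge_act (s, t) p) \<subseteq> {i, Suc i}" using set_edge_act[of s t p] p st by auto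
  have \<sigma>: "\<sigma> = [] \<or> hd \<sigma> \<notin> {i, Suc i}" unfolding \<sigma>_def by (rule edge_suffix_hd)
  have v_split: "v = edge_act (s, t) p @ \<sigma>"
    unfolding v_def u_split using edge_act_append[of p s t \<sigma>] p \<sigma> st by simp
  have own: "own \<in> cycles k n" unfolding own_def p_def \<sigma>_def using own_cycle_mem_cycles[OF u i] .
  have others: "contrib u c = contrib v c" if "c \<in> cycles k n - {own}" for c
  proof -
    obtain i' j \<tau> where c: "c = (i', j, \<tau>)" by (cases c)
    have "\<tau> = [] \<or> hd \<tau> \<notin> {i', Suc i'}" "j \<le> length p + length \<sigma>"
      using that u length_words[OF u] unfolding c cycles_def u_split by auto
    with that p p' \<sigma> have "cycle_pos i' j \<tau> (p @ \<sigma>) = cycle_pos i' j \<tau> (edge_act (s, t) p @ \<sigma>)"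
      by (intro cycle_pos_other_cycle) (auto simp: c own_def)
    then show ?thesis unfolding contrib_def c u_split v_split by simp
  qed
  have split: "cactus_dist k n x w = cyc_dist (2 ^ length p) (cycle_pos i (length p) \<sigma> x) z
      + sum (contrib x) (cycles k n - {own})" for x
    using sum.remove[OF finite_cycles own, of "contrib x"]
    unfolding cactus_dist_def contrib_def own_def z_def p_def \<sigma>_def by (simp add: split_def)
  have "cycle_pos i (length p) \<sigma> u = edge_proj i p"
    unfolding cycle_pos_def u_split by simp
  moreover have "cycle_pos i (length p) \<sigma> v = edge_proj i (edge_act (s, t) p)"
    unfolding cycle_pos_def v_split by simp
  moreover have "sum (contrib v) (cycles k n - {own}) = sum (contrib u) (cycles k n - {own})"
    using others by simp
  ultimately show ?thesis using split[of u] split[of v] unfolding v_def by simp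
qed

lemma edge_pair_cases: "{s, t} = {i, Suc i} \<Longrightarrow> (s, t) = (Suc i, i) \<or> (s, t) = (i, Suc i)"
  by (auto simp: doubleton_eq_iff)

lemma cactus_dist_edge_act_le:
  assumes u: "u \<in> words {0..<k} n" and i: "Suc i < k" and st: "{s, t} = {i, Suc i}"
  shows "cactus_dist k n (edge_act (s, t) u) w \<le> cactus_dist k n u w + 1"
proof -
  define p where "p = edge_prefix i u"
  define z where "z = cycle_pos i (length p) (edge_suffix i u) w"
  have x: "edge_proj i p < 2 ^ length p" by (rule edge_proj_less)
  have z: "z < 2 ^ length p" unfolding z_def by (rule cycle_pos_less)
  have "set p \<subseteq> {i, Suc i}" unfolding p_def by (rule set_edge_prefix)
  then have "cyc_dist (2 ^ length p) (edge_proj i (edge_act (s, t) p)) z \<le> cyc_dist (2 ^ length p) (edge_proj i p) z + 1"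
    using edge_pair_cases[OF st] edge_proj_edge_act_succ edge_proj_edge_act_pred
      cyc_dist_succ_le[OF x z] cyc_dist_pred_le[OF x z] by auto
  with cactus_dist_edge_act[OF u i st, of w] show ?thesis unfolding p_def z_def by simp
qed

lemma path_edges_cases:
  "e \<in> path_edges k orient \<Longrightarrow> \<exists>i s t. e = (s, t) \<and> Suc i < k \<and> {s, t} = {i, Suc i}"
  unfolding path_edges_def by (auto split: if_splits)

lemma schreier_adj_path_cases:
  assumes "(x, y) \<in> schreier_adj {0..<k} (path_edges k orient) n"
  obtains i s t where "Suc i < k" "{s, t} = {i, Suc i}" "x \<in> words {0..<k} n" "y = edge_act (s, t) x"
proof -
  obtain u e where u: "u \<in> words {0..<k} n" and "e \<in> path_edges k orient"
    and xy: "(x, y) = (u, edge_act e u) \<or> (x, y) = (edge_act e u, u)"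
    using assms unfolding schreier_adj_def by blast
  then obtain i s t where e: "e = (s, t)" "Suc i < k" "{s, t} = {i, Suc i}"
    using path_edges_cases by blast
  have "s \<noteq> t" and ts: "{t, s} = {i, Suc i}" using e(3) by (auto simp: doubleton_eq_iff)
  from xy show ?thesis
  proof
    assume "(x, y) = (u, edge_act e u)"
    then show ?thesis using that[OF e(2,3)] u e(1) by simp
  next
    assume "(x, y) = (edge_act e u, u)"
    then show ?thesis
      using that[OF e(2) ts] edge_act_words[OF u e(2,3)] edge_act_reverse[OF \<open>s \<noteq> t\<close>] e(1) by simp
  qed
qed

lemma edge_act_mem_schreier_adj:
  assumes u: "u \<in> words {0..<k} n" and i: "Suc i < k" and st: "{s, t} = {i, Suc i}"
  shows "(u, edge_act (s, t) u) \<in> schreier_adj {0..<k} (path_edges k orient) n"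
proof -
  define e where "e = (if orient i then (i, i + 1) else (i + 1, i))"
  have e: "e \<in> path_edges k orient" unfolding e_def path_edges_def using i by auto
  show ?thesis
  proof (cases "e = (s, t)")
    case True
    then show ?thesis unfolding schreier_adj_def using u e by blast
  next
    case False
    then have "e = (t, s)" "s \<noteq> t" using st unfolding e_def by (auto simp: doubleton_eq_iff split: if_splits)
    then have "u = edge_act e (edge_act (s, t) u)" using edge_act_reverse by simp
    then show ?thesis unfolding schreier_adj_def using e edge_act_words[OF u i st] by blast
  qed
qed

section \<open>Graph distance\<close>

text \<open>The cactus distance is the graph distance because a word \<open>w \<noteq> u\<close> is never attached
  at \<open>u\<close> itself to all cycles through \<open>u\<close>; on a cycle where it is not, one step of the edge
  moves \<open>u\<close> closer to \<open>w\<close>.\<close>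

definition projects_to_self :: "nat \<Rightarrow> nat list \<Rightarrow> nat list \<Rightarrow> bool" where
  "projects_to_self k u w \<longleftrightarrow> (\<forall>i. Suc i < k \<longrightarrow>
     cycle_pos i (length (edge_prefix i u)) (edge_suffix i u) w = edge_proj i (edge_prefix i u))"

lemma cycle_pos_snoc:
  "j \<le> length w \<Longrightarrow> \<tau> \<noteq> [] \<Longrightarrow> cycle_pos i j (\<tau> @ [a]) (w @ [a]) = cycle_pos i j \<tau> w"
  unfolding cycle_pos_def outside_pos_def by auto

lemma projects_to_self_inside:
  assumes "projects_to_self k u w" "Suc i < k" "set u \<subseteq> {i, Suc i}" "length w = length u"
  shows "edge_proj i w = edge_proj i u"
proof -
  have own: "edge_prefix i u = u" "edge_suffix i u = []"
    using assms(3) by (auto simp: takeWhile_eq_all_conv dropWhile_eq_Nil_conv subset_iff)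
  have "cycle_pos i (length (edge_prefix i u)) (edge_suffix i u) w = edge_proj i (edge_prefix i u)"
    using assms(1,2) unfolding projects_to_self_def by blast
  then show ?thesis using assms(4) unfolding own cycle_pos_def by simp
qed

lemma projects_to_self_snoc:
  assumes H: "projects_to_self k (u @ [a]) (w @ [a])" and len: "length w = length u"
  shows "projects_to_self k u w"
  unfolding projects_to_self_def
proof (intro allI impI)
  fix i assume i: "Suc i < k"
  have Hi: "cycle_pos i (length (edge_prefix i (u @ [a]))) (edge_suffix i (u @ [a])) (w @ [a])
      = edge_proj i (edge_prefix i (u @ [a]))"
    using H i unfolding projects_to_self_def by blast
  show "cycle_pos i (length (edge_prefix i u)) (edge_suffix i u) w = edge_proj i (edge_prefix i u)"
  proof (cases "set u \<subseteq> {i, Suc i}")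
    case inside: True
    then have own: "edge_prefix i u = u" "edge_suffix i u = []"
      by (auto simp: takeWhile_eq_all_conv dropWhile_eq_Nil_conv subset_iff)
    have "edge_proj i w = edge_proj i u"
    proof (cases "a \<in> {i, Suc i}")
      case True
      with inside have "edge_prefix i (u @ [a]) = u @ [a]" "edge_suffix i (u @ [a]) = []"
        by (auto simp: takeWhile_eq_all_conv dropWhile_eq_Nil_conv subset_iff)
      with Hi len have "edge_proj i (w @ [a]) = edge_proj i (u @ [a])" by (simp add: cycle_pos_def)
      with True len show ?thesis by (auto simp: edge_proj_snoc snoc_pos_def)
    next
      case False
      with inside have "edge_prefix i (u @ [a]) = u" "edge_suffix i (u @ [a]) = [a]"
        by (auto simp: takeWhile_append2 dropWhile_append2 subset_iff)
      with Hi len show ?thesis by (simp add: cycle_pos_def)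
    qed
    then show ?thesis using len unfolding own cycle_pos_def by simp
  next
    case False
    then obtain x where "x \<in> set u" "x \<notin> {i, Suc i}" by auto
    then have "edge_prefix i (u @ [a]) = edge_prefix i u" "edge_suffix i (u @ [a]) = edge_suffix i u @ [a]"
      "edge_suffix i u \<noteq> []"
      by (auto simp: takeWhile_append1 dropWhile_append1 dropWhile_eq_Nil_conv)
    moreover have "length (edge_prefix i u) \<le> length w" using len by (simp add: length_takeWhile_le)
    ultimately show ?thesis using Hi cycle_pos_snoc by simp
  qed
qed

lemma projects_to_self_last_inside:
  assumes H: "projects_to_self k (u @ [a]) (w @ [b])" and len: "length w = length u"
    and i: "Suc i < k" and inside: "set (u @ [a]) \<subseteq> {i, Suc i}" and b: "b < k"
  shows "b = a"
proof (rule ccontr)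
  assume "b \<noteq> a"
  define M where "M = (2::nat) ^ length u"
  have M: "0 < M" unfolding M_def by simp
  have less: "edge_proj i' w < M" for i' using edge_proj_less[of i' w] len unfolding M_def by simp
  have snoc: "edge_proj i' (v @ [c]) = snoc_pos i' M (edge_proj i' v) c" if "length v = length u" for i' v c
    using that unfolding M_def by (simp add: edge_proj_snoc)
  have max: "2 ^ length (u @ [a]) - 1 = 2 * M - 1" unfolding M_def by simp
  have eq: "edge_proj i (w @ [b]) = edge_proj i (u @ [a])"
    using projects_to_self_inside[OF H i inside] len by simp
  consider "b \<in> {i, Suc i}" | "Suc i < b" | "b < i" by force
  then show False
  proof cases
    case 1
    with eq \<open>b \<noteq> a\<close> inside less[of i] edge_proj_less[of i u] len show False
      unfolding M_def by (auto simp: edge_proj_snoc snoc_pos_def)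
  next
    case 2
    then have "edge_proj i (u @ [a]) = 2 ^ length (u @ [a]) - 1"
      using eq len unfolding max by (simp add: snoc snoc_pos_def)
    then have "set (u @ [a]) \<subseteq> {Suc i}" using edge_proj_eq_max_iff[OF inside] by simp
    then have inside': "set (u @ [a]) \<subseteq> {Suc i, Suc (Suc i)}" and "edge_proj (Suc i) (u @ [a]) = 0"
      using edge_proj_eq_0_iff[of "u @ [a]" "Suc i"] by auto
    moreover have "Suc (Suc i) < k" using 2 b by simp
    ultimately have "edge_proj (Suc i) (w @ [b]) = 0"
      using projects_to_self_inside[OF H _ inside'] len by simp
    with 2 M len show False by (auto simp: snoc snoc_pos_def split: if_splits)
  next
    case 3
    then obtain i' where i': "i = Suc i'" by (cases i) auto
    have "edge_proj i (u @ [a]) = 0" using eq 3 len by (simp add: snoc snoc_pos_def)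
    then have "set (u @ [a]) \<subseteq> {Suc i'}" using edge_proj_eq_0_iff[OF inside] i' by simp
    then have inside': "set (u @ [a]) \<subseteq> {i', Suc i'}" and "edge_proj i' (u @ [a]) = 2 * M - 1"
      using edge_proj_eq_max_iff[of "u @ [a]" i'] unfolding max by auto
    moreover have "Suc i' < k" using i i' by simp
    ultimately have "edge_proj i' (w @ [b]) = 2 * M - 1"
      using projects_to_self_inside[OF H _ inside'] len by simp
    with 3 i' less[of i'] len show False by (auto simp: snoc snoc_pos_def split: if_splits)
  qed
qed

lemma outside_pos_ne_edge_proj_mixed:
  assumes "set p \<subseteq> {i, Suc i}" "i \<in> set p" "Suc i \<in> set p"
  shows "outside_pos i (length p) \<tau> \<noteq> edge_proj i p"
proof -
  have "edge_proj i p \<noteq> 0" using edge_proj_eq_0_iff[OF assms(1)] assms(3) by auto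
  moreover have "edge_proj i p \<noteq> 2 ^ length p - 1" using edge_proj_eq_max_iff[OF assms(1)] assms(2) by auto
  ultimately show ?thesis unfolding outside_pos_def by simp
qed

lemma outside_pos_ne_edge_proj_run:
  assumes "p \<noteq> []" "set p \<subseteq> {a}" and "a = i \<and> Suc i < x \<or> a = Suc i \<and> x < i"
  shows "outside_pos i (length p) (x # \<tau>) \<noteq> edge_proj i p"
proof -
  have max: "(2::nat) ^ length p - 1 \<noteq> 0" using assms(1) one_less_power[of "2::nat" "length p"] by simp
  have sub: "set p \<subseteq> {i, Suc i}" using assms(2,3) by auto
  from assms(3) show ?thesis
  proof
    assume a: "a = i \<and> Suc i < x"
    then have "edge_proj i p = 0" using edge_proj_eq_0_iff[OF sub] assms(2) by simp
    with a max show ?thesis unfolding outside_pos_def by simp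
  next
    assume a: "a = Suc i \<and> x < i"
    then have "edge_proj i p = 2 ^ length p - 1" using edge_proj_eq_max_iff[OF sub] assms(2) by simp
    with a max show ?thesis unfolding outside_pos_def by simp
  qed
qed

text \<open>The edge is chosen from the first two distinct letters of \<open>u\<close>.\<close>

lemma own_cycle_inside_or_off_gate:
  assumes k: "2 \<le> k" and u: "u \<noteq> []" "set u \<subseteq> {0..<k}"
  shows "\<exists>i. Suc i < k \<and> (set u \<subseteq> {i, Suc i} \<or>
           outside_pos i (length (edge_prefix i u)) (edge_suffix i u) \<noteq> edge_proj i (edge_prefix i u))"
proof -
  define a where "a = hd u"
  define r1 where "r1 = takeWhile (\<lambda>y. y = a) u"
  define r2 where "r2 = dropWhile (\<lambda>y. y = a) u"
  have u_split: "u = r1 @ r2" unfolding r1_def r2_def by simp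
  have r1: "set r1 \<subseteq> {a}" unfolding r1_def by (auto dest: set_takeWhileD)
  have "r1 \<noteq> []" using u unfolding r1_def a_def by (cases u) auto
  have a: "a < k" using u unfolding a_def by (cases u) auto
  show ?thesis
  proof (cases r2)
    case Nil
    define i where "i = (if Suc a < k then a else a - 1)"
    have "Suc i < k \<and> set u \<subseteq> {i, Suc i}" using Nil u_split r1 a k unfolding i_def by auto
    then show ?thesis by blast
  next
    case (Cons x rest)
    have "x \<noteq> a" using Cons hd_dropWhile[of "\<lambda>y. y = a" u] unfolding r2_def by auto
    have "x < k" using u u_split Cons by auto
    define i where "i = (if a < x then a else a - 1)"
    have i: "Suc i < k" and a_in: "a \<in> {i, Suc i}" using \<open>x < k\<close> \<open>x \<noteq> a\<close> a unfolding i_def by auto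
    have r1_in: "\<And>y. y \<in> set r1 \<Longrightarrow> y \<in> {i, Suc i}" using r1 a_in by auto
    have pre: "edge_prefix i u = r1 @ edge_prefix i r2" unfolding u_split by (rule takeWhile_append2) (rule r1_in)
    have suf: "edge_suffix i u = edge_suffix i r2" unfolding u_split by (rule dropWhile_append2) (rule r1_in)
    have "outside_pos i (length (edge_prefix i u)) (edge_suffix i u) \<noteq> edge_proj i (edge_prefix i u)"
    proof (cases "x \<in> {i, Suc i}")
      case True
      have "a \<in> set (edge_prefix i u)" "x \<in> set (edge_prefix i u)"
        using pre \<open>r1 \<noteq> []\<close> r1 Cons True by (auto simp: neq_Nil_conv)
      with True a_in \<open>x \<noteq> a\<close> have "i \<in> set (edge_prefix i u)" "Suc i \<in> set (edge_prefix i u)"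
        by auto
      then show ?thesis by (rule outside_pos_ne_edge_proj_mixed[OF set_edge_prefix])
    next
      case False
      then have "edge_prefix i u = r1" "edge_suffix i u = x # rest" using pre suf Cons by auto
      moreover have "a = i \<and> Suc i < x \<or> a = Suc i \<and> x < i"
        using False \<open>x \<noteq> a\<close> unfolding i_def by (auto split: if_splits)
      ultimately show ?thesis using outside_pos_ne_edge_proj_run[OF \<open>r1 \<noteq> []\<close> r1] by simp
    qed
    then show ?thesis using i by blast
  qed
qed

lemma projects_to_self_last:
  assumes H: "projects_to_self k (u @ [a]) (w @ [b])" and len: "length w = length u"
    and k: "set (u @ [a]) \<subseteq> {0..<k}" "b < k"
  shows "b = a"
proof (rule ccontr)
  assume "b \<noteq> a"
  then have "2 \<le> k" using k by auto
  then obtain i where i: "Suc i < k" and alt: "set (u @ [a]) \<subseteq> {i, Suc i} \<or>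
      outside_pos i (length (edge_prefix i (u @ [a]))) (edge_suffix i (u @ [a]))
        \<noteq> edge_proj i (edge_prefix i (u @ [a]))"
    using own_cycle_inside_or_off_gate[of k "u @ [a]"] k by blast
  show False
  proof (cases "edge_suffix i (u @ [a]) = []")
    case True
    then have "set (u @ [a]) \<subseteq> {i, Suc i}" by (auto simp: dropWhile_eq_Nil_conv)
    then show False using projects_to_self_last_inside[OF H len i _ k(2)] \<open>b \<noteq> a\<close> by simp
  next
    case False
    define j where "j = length (edge_prefix i (u @ [a]))"
    have "j + length (edge_suffix i (u @ [a])) = Suc (length w)"
      unfolding j_def using len by (metis length_append length_append_singleton takeWhile_dropWhile_id)
    with False have "j \<le> length w" by (cases "edge_suffix i (u @ [a])") auto
    then have "drop j (w @ [b]) \<noteq> [] \<and> last (drop j (w @ [b])) = b" by simp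
    moreover have "last (edge_suffix i (u @ [a])) = a"
      using False by (metis last_appendR last_snoc takeWhile_dropWhile_id)
    ultimately have "drop j (w @ [b]) \<noteq> edge_suffix i (u @ [a])" using \<open>b \<noteq> a\<close> by metis
    then have "outside_pos i j (edge_suffix i (u @ [a])) = edge_proj i (edge_prefix i (u @ [a]))"
      using H i unfolding projects_to_self_def cycle_pos_def j_def by auto
    moreover have "\<not> set (u @ [a]) \<subseteq> {i, Suc i}" using False by (auto simp: dropWhile_eq_Nil_conv)
    ultimately show False using alt unfolding j_def by simp
  qed
qed

lemma projects_to_self_imp_eq:
  "projects_to_self k u w \<Longrightarrow> length w = length u \<Longrightarrow> set u \<subseteq> {0..<k} \<Longrightarrow> set w \<subseteq> {0..<k} \<Longrightarrow> w = u"
proof (induction u arbitrary: w rule: rev_induct)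
  case (snoc a u)
  obtain w' b where w: "w = w' @ [b]" using snoc.prems(2) by (cases w rule: rev_exhaust) auto
  have "b = a" using projects_to_self_last snoc.prems w by simp
  then have "w' = u" using snoc projects_to_self_snoc w by simp
  with \<open>b = a\<close> w show ?case by simp
qed simp

lemma schreier_adj_cactus_dist_le:
  assumes "(x, y) \<in> schreier_adj {0..<k} (path_edges k orient) n"
  shows "x \<in> words {0..<k} n" "y \<in> words {0..<k} n" "cactus_dist k n x w \<le> cactus_dist k n y w + 1"
proof -
  obtain i s t where i: "Suc i < k" and st: "{s, t} = {i, Suc i}" and x: "x \<in> words {0..<k} n"
    and y: "y = edge_act (s, t) x"
    using assms by (rule schreier_adj_path_cases)
  have ts: "{t, s} = {i, Suc i}" and "s \<noteq> t" using st by (auto simp: doubleton_eq_iff)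
  show "x \<in> words {0..<k} n" by (fact x)
  show y_words: "y \<in> words {0..<k} n" unfolding y using x i st by (rule edge_act_words)
  have "x = edge_act (t, s) y" unfolding y using edge_act_reverse[OF \<open>s \<noteq> t\<close>] by simp
  then show "cactus_dist k n x w \<le> cactus_dist k n y w + 1"
    using cactus_dist_edge_act_le[OF y_words i ts] by simp
qed

lemma cactus_dist_descent:
  assumes u: "u \<in> words {0..<k} n" and w: "w \<in> words {0..<k} n" and "u \<noteq> w"
  obtains v where "(u, v) \<in> schreier_adj {0..<k} (path_edges k orient) n"
    and "cactus_dist k n v w + 1 = cactus_dist k n u w"
proof -
  have "\<not> projects_to_self k u w"
  proof
    assume "projects_to_self k u w"
    moreover have "length w = length u" "set u \<subseteq> {0..<k}" "set w \<subseteq> {0..<k}"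
      using u w unfolding words_def by auto
    ultimately have "w = u" by (rule projects_to_self_imp_eq)
    with \<open>u \<noteq> w\<close> show False by simp
  qed
  then obtain i where i: "Suc i < k"
    and off: "cycle_pos i (length (edge_prefix i u)) (edge_suffix i u) w \<noteq> edge_proj i (edge_prefix i u)"
    unfolding projects_to_self_def by blast
  define p where "p = edge_prefix i u"
  define z where "z = cycle_pos i (length p) (edge_suffix i u) w"
  define M where "M = (2::nat) ^ length p"
  have step: "cactus_dist k n (edge_act (s, t) u) w + 1 = cactus_dist k n u w"
    if st: "{s, t} = {i, Suc i}" and dec: "cyc_dist M (edge_proj i (edge_act (s, t) p)) z + 1 = cyc_dist M (edge_proj i p) z"
    for s t
    using cactus_dist_edge_act[OF u i st, of w] dec unfolding p_def z_def M_def by simp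
  have p: "set p \<subseteq> {i, Suc i}" unfolding p_def by (rule set_edge_prefix)
  have x: "edge_proj i p < M" unfolding M_def by (rule edge_proj_less)
  have z: "z < M" unfolding z_def M_def by (rule cycle_pos_less)
  have "edge_proj i p \<noteq> z" using off unfolding p_def z_def by simp
  from cyc_dist_descent[OF x z this]
  consider "cyc_dist M (edge_proj i (edge_act (Suc i, i) p)) z + 1 = cyc_dist M (edge_proj i p) z"
    | "cyc_dist M (edge_proj i (edge_act (i, Suc i) p)) z + 1 = cyc_dist M (edge_proj i p) z"
    unfolding M_def edge_proj_edge_act_succ[OF p] edge_proj_edge_act_pred[OF p] by blast
  then show ?thesis
  proof cases
    case 1
    have st: "{Suc i, i} = {i, Suc i}" by auto
    show ?thesis by (rule that[OF edge_act_mem_schreier_adj[OF u i st] step[OF st 1]])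
  next
    case 2
    show ?thesis by (rule that[OF edge_act_mem_schreier_adj[OF u i refl] step[OF refl 2]])
  qed
qed

lemma cactus_dist_le_of_relpow:
  "(u, w) \<in> schreier_adj {0..<k} (path_edges k orient) n ^^ m \<Longrightarrow> cactus_dist k n u w \<le> m"
proof (induction m arbitrary: u)
  case (Suc m)
  then obtain v where uv: "(u, v) \<in> schreier_adj {0..<k} (path_edges k orient) n"
    and vw: "(v, w) \<in> schreier_adj {0..<k} (path_edges k orient) n ^^ m"
    by (meson relpow_Suc_D2)
  have "cactus_dist k n u w \<le> cactus_dist k n v w + 1" by (rule schreier_adj_cactus_dist_le(3)[OF uv])
  with Suc.IH[OF vw] show ?case by simp
qed simp

lemma relpow_of_cactus_dist:
  "u \<in> words {0..<k} n \<Longrightarrow> w \<in> words {0..<k} n \<Longrightarrow>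
   (u, w) \<in> schreier_adj {0..<k} (path_edges k orient) n ^^ cactus_dist k n u w"
proof (induction "cactus_dist k n u w" arbitrary: u)
  case 0
  have "u = w"
  proof (rule ccontr)
    assume "u \<noteq> w"
    then obtain v where "cactus_dist k n v w + 1 = cactus_dist k n u w"
      using cactus_dist_descent[OF 0(2,3)] by blast
    with 0(1) show False by simp
  qed
  then show ?case by simp
next
  case (Suc d)
  then have "u \<noteq> w" by force
  then obtain v where uv: "(u, v) \<in> schreier_adj {0..<k} (path_edges k orient) n"
    and dec: "cactus_dist k n v w + 1 = cactus_dist k n u w"
    using cactus_dist_descent[OF Suc.prems] by blast
  have "d = cactus_dist k n v w" using Suc.hyps(2) dec by simp
  with Suc.hyps(1)[of v] have "(v, w) \<in> schreier_adj {0..<k} (path_edges k orient) n ^^ d"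
    using schreier_adj_cactus_dist_le(2)[OF uv] Suc.prems(2) by simp
  with uv show ?case unfolding Suc.hyps(2)[symmetric] by (rule relpow_Suc_I2)
qed

lemma graph_dist_schreier_path:
  "u \<in> words {0..<k} n \<Longrightarrow> w \<in> words {0..<k} n \<Longrightarrow>
   graph_dist (schreier_adj {0..<k} (path_edges k orient) n) u w = cactus_dist k n u w"
  unfolding graph_dist_def by (rule Least_equality) (auto intro: relpow_of_cactus_dist cactus_dist_le_of_relpow)

lemma wiener_eq_sum_cactus_dist:
  "wiener (words {0..<k} n) (schreier_adj {0..<k} (path_edges k orient) n)
   = real (\<Sum>u\<in>words {0..<k} n. \<Sum>w\<in>words {0..<k} n. cactus_dist k n u w) / 2"
  unfolding wiener_def by (simp add: graph_dist_schreier_path)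

section \<open>Sum of all distances\<close>

lemma sum_atLeast0LessThan_split_pair:
  "Suc i < k \<Longrightarrow> (\<Sum>a\<in>{0..<k}. g a) = (\<Sum>a\<in>{0..<i}. g a) + g i + g (Suc i) + (\<Sum>a\<in>{Suc (Suc i)..<k}. g a)"
proof -
  assume ik: "Suc i < k"
  have "(\<Sum>a\<in>{0..<k}. g a) = (\<Sum>a\<in>{0..<i}. g a) + (\<Sum>a\<in>{i..<k}. g a)"
    using ik by (subst sum.atLeastLessThan_concat) auto
  also have "(\<Sum>a\<in>{i..<k}. g a) = g i + (\<Sum>a\<in>{Suc i..<k}. g a)"
    using ik by (subst sum.atLeast_Suc_lessThan) auto
  also have "(\<Sum>a\<in>{Suc i..<k}. g a) = g (Suc i) + (\<Sum>a\<in>{Suc (Suc i)..<k}. g a)"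
    using ik by (subst sum.atLeast_Suc_lessThan) auto
  finally show ?thesis by (simp add: add.assoc)
qed

lemma sum_snoc_pos: "Suc i < k \<Longrightarrow> (\<Sum>b\<in>{0..<k}. h (snoc_pos i M y b)) = i * h 0 + h y + h (y + M) + (k - 2 - i) * h (2 * M - 1)"
proof -
  assume ik: "Suc i < k"
  have "(\<Sum>b\<in>{0..<i}. h (snoc_pos i M y b)) = (\<Sum>b\<in>{0..<i}. h 0)" by (rule sum.cong) (auto simp: snoc_pos_def)
  moreover have "(\<Sum>b\<in>{Suc (Suc i)..<k}. h (snoc_pos i M y b)) = (\<Sum>b\<in>{Suc (Suc i)..<k}. h (2 * M - 1))"
    by (rule sum.cong) (auto simp: snoc_pos_def)
  ultimately show ?thesis using sum_atLeast0LessThan_split_pair[OF ik, of "\<lambda>b. h (snoc_pos i M y b)"] by (simp add: snoc_pos_def)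
qed

lemma sum_cyc_dist_snoc_pos:
  assumes ik: "Suc i < k" and x: "x < M" and y: "y < M"
  shows "(\<Sum>b\<in>{0..<k}. cyc_dist (2 * M) 0 (snoc_pos i M y b)) = M + (k - 2 - i)"
    and "(\<Sum>b\<in>{0..<k}. cyc_dist (2 * M) x (snoc_pos i M y b)) = i * x + M + (k - 2 - i) * (x + 1)"
    and "(\<Sum>b\<in>{0..<k}. cyc_dist (2 * M) (x + M) (snoc_pos i M y b)) = i * (M - x) + M + (k - 2 - i) * (M - 1 - x)"
    and "(\<Sum>b\<in>{0..<k}. cyc_dist (2 * M) (2 * M - 1) (snoc_pos i M y b)) = i + M"
proof -
  have M: "0 < M" using x by simp
  have d: "absdiff x y < M" using x y unfolding absdiff_def by auto
  note row = sum_snoc_pos[OF ik, of "cyc_dist (2 * M) _" M y]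
  show "(\<Sum>b\<in>{0..<k}. cyc_dist (2 * M) 0 (snoc_pos i M y b)) = M + (k - 2 - i)"
    using row cyc_dist_double(1,3)[OF M y] cyc_dist_double_top(2)[OF M] y by (simp add: absdiff_def)
  show "(\<Sum>b\<in>{0..<k}. cyc_dist (2 * M) x (snoc_pos i M y b)) = i * x + M + (k - 2 - i) * (x + 1)"
    using row cyc_dist_double(1)[OF x M] cyc_dist_double(1,3)[OF x y] cyc_dist_double_top(2)[OF x] d
    by (simp add: absdiff_def)
  show "(\<Sum>b\<in>{0..<k}. cyc_dist (2 * M) (x + M) (snoc_pos i M y b)) = i * (M - x) + M + (k - 2 - i) * (M - 1 - x)"
    using row cyc_dist_double(4)[OF x M] cyc_dist_double(2,4)[OF x y] cyc_dist_double_top(4)[OF x] d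
    by (simp add: absdiff_def)
  show "(\<Sum>b\<in>{0..<k}. cyc_dist (2 * M) (2 * M - 1) (snoc_pos i M y b)) = i + M"
    using row cyc_dist_double_top(1)[OF M] cyc_dist_double_top(1,3)[OF y] y by simp
qed

lemma sum_snoc_pos_pairs:
  assumes ik: "Suc i < k" and x: "x < M" and y: "y < M"
  shows "(\<Sum>a\<in>{0..<k}. \<Sum>b\<in>{0..<k}. cyc_dist (2 * M) (snoc_pos i M x a) (snoc_pos i M y b)) = 2 * M * (k - 1) + 2 * i * (k - 2 - i)"
proof -
  define \<beta> where "\<beta> = k - 2 - i"
  have "(\<Sum>a\<in>{0..<k}. \<Sum>b\<in>{0..<k}. cyc_dist (2 * M) (snoc_pos i M x a) (snoc_pos i M y b))
      = i * (M + \<beta>) + (i * x + M + \<beta> * (x + 1)) + (i * (M - x) + M + \<beta> * (M - 1 - x)) + \<beta> * (i + M)"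
    using sum_snoc_pos[OF ik, of "\<lambda>u. \<Sum>b\<in>{0..<k}. cyc_dist (2 * M) u (snoc_pos i M y b)" M x]
    unfolding sum_cyc_dist_snoc_pos[OF ik x y] \<beta>_def by simp
  also have "\<dots> = 2 * M * (i + \<beta> + 1) + 2 * i * \<beta>"
  proof -
    have "x + (M - x) = M" "(x + 1) + (M - 1 - x) = M" using x by simp_all
    then have "i * x + i * (M - x) = i * M" "\<beta> * (x + 1) + \<beta> * (M - 1 - x) = \<beta> * M"
      by (metis distrib_left)+
    then show ?thesis by (simp add: algebra_simps)
  qed
  also have "i + \<beta> + 1 = k - 1" unfolding \<beta>_def using ik by simp
  finally show ?thesis unfolding \<beta>_def .
qed

definition pair_sum :: "nat \<Rightarrow> nat \<Rightarrow> nat \<Rightarrow> nat" where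
  "pair_sum k i j = (\<Sum>q\<in>words {0..<k} j. \<Sum>q'\<in>words {0..<k} j. cyc_dist (2 ^ j) (edge_proj i q) (edge_proj i q'))"

definition gate_sum :: "nat \<Rightarrow> nat \<Rightarrow> nat \<Rightarrow> nat \<Rightarrow> nat" where
  "gate_sum k i j d = (\<Sum>q\<in>words {0..<k} j. cyc_dist (2 ^ j) (edge_proj i q) d)"

lemma pair_sum_0: "pair_sum k i 0 = 0"
  unfolding pair_sum_def words_0 by simp

lemma gate_sum_0: "gate_sum k i 0 0 = 0"
  unfolding gate_sum_def words_0 by simp

lemma pair_sum_Suc:
  assumes ik: "Suc i < k"
  shows "pair_sum k i (Suc j) = k ^ j * k ^ j * (2 * 2 ^ j * (k - 1) + 2 * i * (k - 2 - i))"
proof -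
  let ?W = "words {0..<k} j"
  let ?M = "(2::nat) ^ j"
  let ?C = "2 * ?M * (k - 1) + 2 * i * (k - 2 - i)"
  have "pair_sum k i (Suc j) = (\<Sum>q\<in>?W. \<Sum>a\<in>{0..<k}. \<Sum>q'\<in>?W. \<Sum>b\<in>{0..<k}. cyc_dist (2 * ?M) (edge_proj i (q @ [a])) (edge_proj i (q' @ [b])))"
    unfolding pair_sum_def by (simp add: sum_words_snoc)
  also have "\<dots> = (\<Sum>q\<in>?W. \<Sum>a\<in>{0..<k}. \<Sum>q'\<in>?W. \<Sum>b\<in>{0..<k}. cyc_dist (2 * ?M) (snoc_pos i ?M (edge_proj i q) a) (snoc_pos i ?M (edge_proj i q') b))"
    by (intro sum.cong refl) (simp add: edge_proj_snoc length_words)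
  also have "\<dots> = (\<Sum>q\<in>?W. \<Sum>q'\<in>?W. \<Sum>a\<in>{0..<k}. \<Sum>b\<in>{0..<k}. cyc_dist (2 * ?M) (snoc_pos i ?M (edge_proj i q) a) (snoc_pos i ?M (edge_proj i q') b))"
    by (intro sum.cong refl) (rule sum.swap)
  also have "\<dots> = (\<Sum>q\<in>?W. \<Sum>q'\<in>?W. ?C)"
  proof (intro sum.cong refl)
    fix q q' assume q: "q \<in> ?W" and q': "q' \<in> ?W"
    have "edge_proj i q < ?M" using edge_proj_less[of i q] length_words[OF q] by simp
    moreover have "edge_proj i q' < ?M" using edge_proj_less[of i q'] length_words[OF q'] by simp
    ultimately show "(\<Sum>a\<in>{0..<k}. \<Sum>b\<in>{0..<k}. cyc_dist (2 * ?M) (snoc_pos i ?M (edge_proj i q) a) (snoc_pos i ?M (edge_proj i q') b)) = ?C"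
      by (rule sum_snoc_pos_pairs[OF ik])
  qed
  also have "\<dots> = k ^ j * k ^ j * ?C" by (simp add: card_words)
  finally show ?thesis .
qed

lemma gate_sum_Suc_0:
  assumes ik: "Suc i < k"
  shows "gate_sum k i (Suc j) 0 = k ^ j * (2 ^ j + (k - 2 - i))"
proof -
  have "gate_sum k i (Suc j) 0 = (\<Sum>q\<in>words {0..<k} j. \<Sum>a\<in>{0..<k}. cyc_dist (2 * 2 ^ j) (snoc_pos i (2 ^ j) (edge_proj i q) a) 0)"
    unfolding gate_sum_def sum_words_snoc by (intro sum.cong refl) (simp add: edge_proj_snoc length_words)
  also have "\<dots> = (\<Sum>q\<in>words {0..<k} j. 2 ^ j + (k - 2 - i))"
  proof (intro sum.cong refl)
    fix q assume "q \<in> words {0..<k} j"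
    then have "edge_proj i q < 2 ^ j" using edge_proj_less length_words by metis
    from sum_cyc_dist_snoc_pos(1)[OF ik this this]
    show "(\<Sum>a\<in>{0..<k}. cyc_dist (2 * 2 ^ j) (snoc_pos i (2 ^ j) (edge_proj i q) a) 0) = 2 ^ j + (k - 2 - i)"
      by (simp add: cyc_dist_commute)
  qed
  finally show ?thesis by (simp add: card_words)
qed

lemma gate_sum_Suc_max:
  assumes ik: "Suc i < k"
  shows "gate_sum k i (Suc j) (2 ^ Suc j - 1) = k ^ j * (2 ^ j + i)"
proof -
  have "gate_sum k i (Suc j) (2 ^ Suc j - 1)
      = (\<Sum>q\<in>words {0..<k} j. \<Sum>a\<in>{0..<k}. cyc_dist (2 * 2 ^ j) (snoc_pos i (2 ^ j) (edge_proj i q) a) (2 * 2 ^ j - 1))"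
    unfolding gate_sum_def sum_words_snoc by (intro sum.cong refl) (simp add: edge_proj_snoc length_words)
  also have "\<dots> = (\<Sum>q\<in>words {0..<k} j. 2 ^ j + i)"
  proof (intro sum.cong refl)
    fix q assume "q \<in> words {0..<k} j"
    then have "edge_proj i q < 2 ^ j" using edge_proj_less length_words by metis
    from sum_cyc_dist_snoc_pos(4)[OF ik this this]
    show "(\<Sum>a\<in>{0..<k}. cyc_dist (2 * 2 ^ j) (snoc_pos i (2 ^ j) (edge_proj i q) a) (2 * 2 ^ j - 1)) = 2 ^ j + i"
      by (simp add: cyc_dist_commute)
  qed
  finally show ?thesis by (simp add: card_words)
qed

lemma sum_cycle_pos:
  assumes t: "\<tau> \<in> words {0..<k} (n - j)" and jn: "j \<le> n"
  shows "(\<Sum>u\<in>words {0..<k} n. g (cycle_pos i j \<tau> u)) = (\<Sum>q\<in>words {0..<k} j. g (edge_proj i q)) + (k ^ n - k ^ j) * g (outside_pos i j \<tau>)"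
proof -
  let ?W = "words {0..<k} n"
  define S1 where "S1 = (\<lambda>q. q @ \<tau>) ` words {0..<k} j"
  have S1W: "S1 \<subseteq> ?W" unfolding S1_def using t jn unfolding words_def by (auto simp: subset_iff)
  have inj: "inj_on (\<lambda>q. q @ \<tau>) (words {0..<k} j)" by (rule inj_onI) simp
  have cS1: "card S1 = k ^ j" unfolding S1_def using card_image[OF inj] card_words by simp
  have S1c: "u \<in> S1 \<longleftrightarrow> u \<in> ?W \<and> drop j u = \<tau>" for u
  proof
    assume "u \<in> S1"
    then obtain q where "q \<in> words {0..<k} j" "u = q @ \<tau>" unfolding S1_def by auto
    then show "u \<in> ?W \<and> drop j u = \<tau>" using S1W \<open>u \<in> S1\<close> by (auto simp: length_words)
  next
    assume h: "u \<in> ?W \<and> drop j u = \<tau>"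
    then have "take j u \<in> words {0..<k} j" unfolding words_def using jn
      by (auto dest: in_set_takeD)
    moreover have "u = take j u @ \<tau>" using h by (metis append_take_drop_id)
    ultimately show "u \<in> S1" unfolding S1_def by blast
  qed
  have fin: "finite ?W" by (simp add: finite_words)
  have "(\<Sum>u\<in>?W. g (cycle_pos i j \<tau> u)) = (\<Sum>u\<in>S1. g (cycle_pos i j \<tau> u)) + (\<Sum>u\<in>?W - S1. g (cycle_pos i j \<tau> u))"
    using sum.subset_diff[OF S1W fin] by (simp add: add.commute)
  also have "(\<Sum>u\<in>S1. g (cycle_pos i j \<tau> u)) = (\<Sum>q\<in>words {0..<k} j. g (cycle_pos i j \<tau> (q @ \<tau>)))"
    unfolding S1_def by (rule sum.reindex[OF inj, unfolded comp_def])
  also have "\<dots> = (\<Sum>q\<in>words {0..<k} j. g (edge_proj i q))"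
    by (rule sum.cong) (auto simp: cycle_pos_def length_words)
  also have "(\<Sum>u\<in>?W - S1. g (cycle_pos i j \<tau> u)) = (\<Sum>u\<in>?W - S1. g (outside_pos i j \<tau>))"
    by (rule sum.cong) (auto simp: cycle_pos_def S1c)
  also have "\<dots> = (k ^ n - k ^ j) * g (outside_pos i j \<tau>)"
    using card_Diff_subset[OF finite_subset[OF S1W fin] S1W] cS1 card_words[of "{0..<k}" n] by simp
  finally show ?thesis .
qed

lemma cycle_pair_sum:
  assumes t: "\<tau> \<in> words {0..<k} (n - j)" and jn: "j \<le> n"
  shows "(\<Sum>u\<in>words {0..<k} n. \<Sum>w\<in>words {0..<k} n. cyc_dist (2 ^ j) (cycle_pos i j \<tau> u) (cycle_pos i j \<tau> w))
     = pair_sum k i j + 2 * (k ^ n - k ^ j) * gate_sum k i j (outside_pos i j \<tau>)"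
proof -
  let ?Q = "words {0..<k} j"
  let ?d = "outside_pos i j \<tau>"
  let ?N = "k ^ n - k ^ j"
  have "(\<Sum>u\<in>words {0..<k} n. \<Sum>w\<in>words {0..<k} n. cyc_dist (2 ^ j) (cycle_pos i j \<tau> u) (cycle_pos i j \<tau> w))
      = (\<Sum>u\<in>words {0..<k} n. (\<lambda>x. (\<Sum>q\<in>?Q. cyc_dist (2 ^ j) x (edge_proj i q)) + ?N * cyc_dist (2 ^ j) x ?d) (cycle_pos i j \<tau> u))"
    using sum_cycle_pos[OF t jn] by simp
  also have "\<dots> = (\<Sum>q'\<in>?Q. (\<Sum>q\<in>?Q. cyc_dist (2 ^ j) (edge_proj i q') (edge_proj i q)) + ?N * cyc_dist (2 ^ j) (edge_proj i q') ?d)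
       + ?N * ((\<Sum>q\<in>?Q. cyc_dist (2 ^ j) ?d (edge_proj i q)) + ?N * cyc_dist (2 ^ j) ?d ?d)"
    by (rule sum_cycle_pos[OF t jn])
  also have "\<dots> = pair_sum k i j + ?N * gate_sum k i j ?d + ?N * gate_sum k i j ?d"
    unfolding pair_sum_def gate_sum_def by (simp add: sum.distrib sum_distrib_left cyc_dist_commute[of "2 ^ j" ?d])
  finally show ?thesis by simp
qed

lemma sum_cactus_dist:
  "(\<Sum>u\<in>words {0..<k} n. \<Sum>w\<in>words {0..<k} n. cactus_dist k n u w)
   = (\<Sum>(i, j, \<tau>)\<in>cycles k n. pair_sum k i j + 2 * (k ^ n - k ^ j) * gate_sum k i j (outside_pos i j \<tau>))"
proof -
  have "(\<Sum>u\<in>words {0..<k} n. \<Sum>w\<in>words {0..<k} n. cactus_dist k n u w)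
      = (\<Sum>u\<in>words {0..<k} n. \<Sum>w\<in>words {0..<k} n. \<Sum>B\<in>cycles k n.
           (\<lambda>(i, j, \<tau>). cyc_dist (2 ^ j) (cycle_pos i j \<tau> u) (cycle_pos i j \<tau> w)) B)"
    unfolding cactus_dist_def by simp
  also have "\<dots> = (\<Sum>u\<in>words {0..<k} n. \<Sum>B\<in>cycles k n. \<Sum>w\<in>words {0..<k} n.
           (\<lambda>(i, j, \<tau>). cyc_dist (2 ^ j) (cycle_pos i j \<tau> u) (cycle_pos i j \<tau> w)) B)"
    by (rule sum.cong[OF refl]) (rule sum.swap)
  also have "\<dots> = (\<Sum>B\<in>cycles k n. \<Sum>u\<in>words {0..<k} n. \<Sum>w\<in>words {0..<k} n.
           (\<lambda>(i, j, \<tau>). cyc_dist (2 ^ j) (cycle_pos i j \<tau> u) (cycle_pos i j \<tau> w)) B)"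
    by (rule sum.swap)
  also have "\<dots> = (\<Sum>(i, j, \<tau>)\<in>cycles k n. pair_sum k i j + 2 * (k ^ n - k ^ j) * gate_sum k i j (outside_pos i j \<tau>))"
  proof (rule sum.cong[OF refl])
    fix B assume "B \<in> cycles k n"
    then obtain i j \<tau> where B: "B = (i, j, \<tau>)" "\<tau> \<in> words {0..<k} (n - j)" "j \<le> n"
      unfolding cycles_def by auto
    show "(\<Sum>u\<in>words {0..<k} n. \<Sum>w\<in>words {0..<k} n. (\<lambda>(i, j, \<tau>). cyc_dist (2 ^ j) (cycle_pos i j \<tau> u) (cycle_pos i j \<tau> w)) B)
        = (\<lambda>(i, j, \<tau>). pair_sum k i j + 2 * (k ^ n - k ^ j) * gate_sum k i j (outside_pos i j \<tau>)) B"
      using cycle_pair_sum[OF B(2,3)] B(1) by simp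
  qed
  finally show ?thesis .
qed

definition suffixes :: "nat \<Rightarrow> nat \<Rightarrow> nat \<Rightarrow> nat \<Rightarrow> nat list set" where
  "suffixes k n i j = {\<tau> \<in> words {0..<k} (n - j). \<tau> = [] \<or> hd \<tau> \<notin> {i, Suc i}}"

lemma cycles_Sigma: "cycles k n = Sigma {..<k - 1} (\<lambda>i. Sigma {..n} (\<lambda>j. suffixes k n i j))"
  unfolding cycles_def suffixes_def by auto

lemma finite_suffixes: "finite (suffixes k n i j)"
  unfolding suffixes_def using finite_words by auto

lemma sum_cycles: "(\<Sum>(i, j, \<tau>)\<in>cycles k n. F i j \<tau>) = (\<Sum>i<k - 1. \<Sum>j\<le>n. \<Sum>\<tau>\<in>suffixes k n i j. F i j \<tau>)"
proof -
  have "(\<Sum>i<k - 1. \<Sum>j\<le>n. \<Sum>\<tau>\<in>suffixes k n i j. F i j \<tau>) = (\<Sum>i<k - 1. \<Sum>(j, \<tau>)\<in>Sigma {..n} (suffixes k n i). F i j \<tau>)"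
    by (rule sum.cong[OF refl]) (rule sum.Sigma, auto simp: finite_suffixes)
  also have "\<dots> = (\<Sum>(i, j, \<tau>)\<in>Sigma {..<k - 1} (\<lambda>i. Sigma {..n} (suffixes k n i)). F i j \<tau>)"
    by (subst sum.Sigma) (auto simp: finite_suffixes)
  finally show ?thesis unfolding cycles_Sigma by simp
qed

lemma suffixes_full: "suffixes k n i n = {[]}"
  unfolding suffixes_def words_def by auto

lemma sum_suffixes_outside_pos:
  assumes jn: "j < n" and ik: "Suc i < k"
  shows "(\<Sum>\<tau>\<in>suffixes k n i j. F (outside_pos i j \<tau>)) = i * k ^ (n - j - 1) * F 0 + (k - 2 - i) * k ^ (n - j - 1) * F (2 ^ j - 1)"
proof -
  define m where "m = n - j - 1"
  have nj: "n - j = Suc m" unfolding m_def using jn by simp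
  define Tlo where "Tlo = {\<tau> \<in> words {0..<k} (Suc m). hd \<tau> \<in> {0..<i}}"
  define Thi where "Thi = {\<tau> \<in> words {0..<k} (Suc m). hd \<tau> \<in> {Suc (Suc i)..<k}}"
  have TT: "suffixes k n i j = Tlo \<union> Thi"
  proof -
    have "\<tau> \<in> suffixes k n i j \<longleftrightarrow> \<tau> \<in> Tlo \<union> Thi" for \<tau>
    proof
      assume h: "\<tau> \<in> suffixes k n i j"
      then have w: "\<tau> \<in> words {0..<k} (Suc m)" and c: "\<tau> = [] \<or> hd \<tau> \<notin> {i, Suc i}" unfolding suffixes_def nj by auto
      then have ne: "\<tau> \<noteq> []" unfolding words_def by auto
      then have "hd \<tau> < k" using w unfolding words_def by (cases \<tau>) auto
      then show "\<tau> \<in> Tlo \<union> Thi" using c ne w unfolding Tlo_def Thi_def by auto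
    next
      assume "\<tau> \<in> Tlo \<union> Thi"
      then show "\<tau> \<in> suffixes k n i j" unfolding suffixes_def Tlo_def Thi_def nj by auto
    qed
    then show ?thesis by blast
  qed
  have disj: "Tlo \<inter> Thi = {}" unfolding Tlo_def Thi_def by auto
  have fin: "finite Tlo" "finite Thi" unfolding Tlo_def Thi_def using finite_words by auto
  have "(\<Sum>\<tau>\<in>suffixes k n i j. F (outside_pos i j \<tau>)) = (\<Sum>\<tau>\<in>Tlo. F (outside_pos i j \<tau>)) + (\<Sum>\<tau>\<in>Thi. F (outside_pos i j \<tau>))"
    unfolding TT by (rule sum.union_disjoint[OF fin disj])
  also have "(\<Sum>\<tau>\<in>Tlo. F (outside_pos i j \<tau>)) = (\<Sum>\<tau>\<in>Tlo. F 0)"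
    by (rule sum.cong) (auto simp: Tlo_def outside_pos_def)
  also have "(\<Sum>\<tau>\<in>Thi. F (outside_pos i j \<tau>)) = (\<Sum>\<tau>\<in>Thi. F (2 ^ j - 1))"
    by (rule sum.cong) (auto simp: Thi_def outside_pos_def)
  finally have e: "(\<Sum>\<tau>\<in>suffixes k n i j. F (outside_pos i j \<tau>)) = card Tlo * F 0 + card Thi * F (2 ^ j - 1)" by simp
  have "card Tlo = i * k ^ m" unfolding Tlo_def using card_words_hd_in[of "{0..<k}" "{0..<i}" m] ik by simp
  moreover have "card Thi = (k - 2 - i) * k ^ m" unfolding Thi_def using card_words_hd_in[of "{0..<k}" "{Suc (Suc i)..<k}" m] by simp
  ultimately show ?thesis using e unfolding m_def by simp
qed

lemma sum_suffixes_cycle_pairs: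
  assumes ik: "Suc i < k" and l: "Suc l < n"
  defines "c \<equiv> i * (k - 2 - i)"
  shows "(\<Sum>\<tau>\<in>suffixes k n i (Suc l).
            pair_sum k i (Suc l) + 2 * (k ^ n - k ^ Suc l) * gate_sum k i (Suc l) (outside_pos i (Suc l) \<tau>))
    = k ^ (n - Suc (Suc l)) * ((k - 2) * (k ^ l * k ^ l * (2 * 2 ^ l * (k - 1) + 2 * c))
         + 2 * (k ^ n - k ^ Suc l) * (k ^ l * ((k - 2) * 2 ^ l + 2 * c)))"
proof -
  define \<beta> where "\<beta> = k - 2 - i"
  define E where "E = k ^ (n - Suc (Suc l))"
  define D where "D = k ^ n - k ^ Suc l"
  define K1 where "K1 = k - 1"
  have i\<beta>: "i + \<beta> = k - 2" unfolding \<beta>_def using ik by simp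
  have "(\<Sum>\<tau>\<in>suffixes k n i (Suc l).
            pair_sum k i (Suc l) + 2 * (k ^ n - k ^ Suc l) * gate_sum k i (Suc l) (outside_pos i (Suc l) \<tau>))
      = i * E * (pair_sum k i (Suc l) + 2 * D * gate_sum k i (Suc l) 0)
        + \<beta> * E * (pair_sum k i (Suc l) + 2 * D * gate_sum k i (Suc l) (2 ^ Suc l - 1))"
    unfolding E_def D_def \<beta>_def using sum_suffixes_outside_pos[OF l ik] by simp
  also have "\<dots> = E * ((i + \<beta>) * (k ^ l * k ^ l * (2 * 2 ^ l * K1 + 2 * (i * \<beta>)))
         + 2 * D * (k ^ l * ((i + \<beta>) * 2 ^ l + 2 * (i * \<beta>))))"
    unfolding pair_sum_Suc[OF ik] gate_sum_Suc_0[OF ik] gate_sum_Suc_max[OF ik] \<beta>_def[symmetric] K1_def[symmetric]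
    by (simp add: algebra_simps)
  finally show ?thesis unfolding c_def E_def D_def K1_def \<beta>_def[symmetric] by (simp only: i\<beta>)
qed

definition edge_sum :: "nat \<Rightarrow> nat \<Rightarrow> nat \<Rightarrow> nat" where
  "edge_sum k n i = (\<Sum>j\<le>n. \<Sum>\<tau>\<in>suffixes k n i j.
     pair_sum k i j + 2 * (k ^ n - k ^ j) * gate_sum k i j (outside_pos i j \<tau>))"

lemma edge_sum_eq:
  assumes ik: "Suc i < k" and n: "n = Suc m"
  defines "c \<equiv> i * (k - 2 - i)"
  shows "edge_sum k n i = k ^ m * k ^ m * (2 * 2 ^ m * (k - 1) + 2 * c)
    + (\<Sum>l<m. k ^ (m - Suc l) * ((k - 2) * (k ^ l * k ^ l * (2 * 2 ^ l * (k - 1) + 2 * c))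
         + 2 * (k ^ n - k ^ Suc l) * (k ^ l * ((k - 2) * 2 ^ l + 2 * c))))"
proof -
  define f where "f j = (\<Sum>\<tau>\<in>suffixes k n i j. pair_sum k i j + 2 * (k ^ n - k ^ j) * gate_sum k i j (outside_pos i j \<tau>))" for j
  have "edge_sum k n i = (\<Sum>j<n. f j) + f n"
    unfolding edge_sum_def f_def by (simp add: lessThan_Suc_atMost[symmetric])
  also have "(\<Sum>j<n. f j) = f 0 + (\<Sum>l<m. f (Suc l))"
    unfolding n by (rule sum.lessThan_Suc_shift)
  also have "f 0 = 0"
    unfolding f_def by (simp add: pair_sum_0 gate_sum_0 outside_pos_def cong: if_cong)
  also have "f n = k ^ m * k ^ m * (2 * 2 ^ m * (k - 1) + 2 * c)"
    unfolding f_def suffixes_full n c_def using pair_sum_Suc[OF ik] by simp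
  also have "(\<Sum>l<m. f (Suc l)) = (\<Sum>l<m. k ^ (m - Suc l) * ((k - 2) * (k ^ l * k ^ l * (2 * 2 ^ l * (k - 1) + 2 * c))
         + 2 * (k ^ n - k ^ Suc l) * (k ^ l * ((k - 2) * 2 ^ l + 2 * c))))"
  proof (intro sum.cong refl)
    fix l assume "l \<in> {..<m}"
    then have l: "Suc l < n" and e: "n - Suc (Suc l) = m - Suc l" using n by auto
    show "f (Suc l) = k ^ (m - Suc l) * ((k - 2) * (k ^ l * k ^ l * (2 * 2 ^ l * (k - 1) + 2 * c))
         + 2 * (k ^ n - k ^ Suc l) * (k ^ l * ((k - 2) * 2 ^ l + 2 * c)))"
      using sum_suffixes_cycle_pairs[OF ik l] unfolding f_def c_def e .
  qed
  finally show ?thesis by simp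
qed

lemma sum_cactus_dist_edges:
  "(\<Sum>u\<in>words {0..<k} n. \<Sum>w\<in>words {0..<k} n. cactus_dist k n u w) = (\<Sum>i<k - 1. edge_sum k n i)"
  unfolding sum_cactus_dist sum_cycles edge_sum_def ..

section \<open>Closed form\<close>

definition edge_base :: "real \<Rightarrow> nat \<Rightarrow> real" where
  "edge_base K m = 2 * 2 ^ m * K ^ m * K ^ m * (K - 1)
     + 2 * (K - 2) * (K ^ m * K ^ m * (2 ^ m - 1) - K ^ m / K * (\<Sum>l<m. (2 * K) ^ l))"

definition edge_weight :: "real \<Rightarrow> nat \<Rightarrow> real" where
  "edge_weight K m = 2 * K ^ m * K ^ m + 4 * m * K ^ m * K ^ m - (2 * K + 4) * (K ^ m / K) * (\<Sum>l<m. K ^ l)"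

lemma sum_edge_cycle_terms:
  fixes K Y c :: real
  shows "(\<Sum>l<m. (K - 2) * K ^ l * (2 * 2 ^ l * (K - 1) + 2 * c) + 2 * (K * Y - K * K ^ l) * ((K - 2) * 2 ^ l + 2 * c))
    = 2 * K * Y * (K - 2) * (\<Sum>l<m. 2 ^ l) - 2 * (K - 2) * (\<Sum>l<m. (2 * K) ^ l)
      + c * (4 * K * Y * m - (2 * K + 4) * (\<Sum>l<m. K ^ l))"
  by (induction m) (simp_all add: algebra_simps power_mult_distrib)

lemma sum_edge_cycles_closed_form:
  fixes K c :: real
  assumes K: "2 \<le> K"
  shows "K ^ m * K ^ m * (2 * 2 ^ m * (K - 1) + 2 * c)
    + (\<Sum>l<m. K ^ (m - Suc l) * ((K - 2) * (K ^ l * K ^ l * (2 * 2 ^ l * (K - 1) + 2 * c))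
         + 2 * (K * K ^ m - K * K ^ l) * (K ^ l * ((K - 2) * 2 ^ l + 2 * c))))
    = edge_base K m + c * edge_weight K m"
proof -
  have "K ^ (m - Suc l) * ((K - 2) * (K ^ l * K ^ l * (2 * 2 ^ l * (K - 1) + 2 * c))
         + 2 * (K * K ^ m - K * K ^ l) * (K ^ l * ((K - 2) * 2 ^ l + 2 * c)))
      = K ^ m / K * ((K - 2) * K ^ l * (2 * 2 ^ l * (K - 1) + 2 * c) + 2 * (K * K ^ m - K * K ^ l) * ((K - 2) * 2 ^ l + 2 * c))"
    if "l < m" for l
  proof -
    define E where "E = K ^ (m - Suc l)"
    have "K ^ m = E * K ^ l * K"
      using that unfolding E_def by (simp flip: power_add power_Suc2)
    with K show ?thesis unfolding E_def[symmetric] by (simp add: field_simps)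
  qed
  then have "(\<Sum>l<m. K ^ (m - Suc l) * ((K - 2) * (K ^ l * K ^ l * (2 * 2 ^ l * (K - 1) + 2 * c))
         + 2 * (K * K ^ m - K * K ^ l) * (K ^ l * ((K - 2) * 2 ^ l + 2 * c))))
      = K ^ m / K * (\<Sum>l<m. (K - 2) * K ^ l * (2 * 2 ^ l * (K - 1) + 2 * c)
          + 2 * (K * K ^ m - K * K ^ l) * ((K - 2) * 2 ^ l + 2 * c))"
    by (simp add: sum_distrib_left)
  also have "\<dots> = K ^ m / K * (2 * K * K ^ m * (K - 2) * (2 ^ m - 1) - 2 * (K - 2) * (\<Sum>l<m. (2 * K) ^ l)
      + c * (4 * K * K ^ m * m - (2 * K + 4) * (\<Sum>l<m. K ^ l)))"
    using geometric_sum[of "2::real" m] unfolding sum_edge_cycle_terms by simp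
  finally have sum: "(\<Sum>l<m. K ^ (m - Suc l) * ((K - 2) * (K ^ l * K ^ l * (2 * 2 ^ l * (K - 1) + 2 * c))
         + 2 * (K * K ^ m - K * K ^ l) * (K ^ l * ((K - 2) * 2 ^ l + 2 * c))))
      = K ^ m / K * (2 * K * K ^ m * (K - 2) * (2 ^ m - 1) - 2 * (K - 2) * (\<Sum>l<m. (2 * K) ^ l)
      + c * (4 * K * K ^ m * m - (2 * K + 4) * (\<Sum>l<m. K ^ l)))" .
  define G where "G = (\<Sum>l<m. (2 * K) ^ l)"
  define H where "H = (\<Sum>l<m. K ^ l)"
  have "K \<noteq> 0" using K by auto
  then show ?thesis unfolding sum edge_base_def edge_weight_def G_def[symmetric] H_def[symmetric]
    by (simp add: field_simps)
qed

lemma edge_sum_closed_form: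
  assumes ik: "Suc i < k" and n: "n = Suc m"
  shows "real (edge_sum k n i) = edge_base k m + (real i * (real k - 2 - real i)) * edge_weight k m"
proof -
  define c where "c = real i * (real k - 2 - real i)"
  have c: "real (i * (k - 2 - i)) = c" unfolding c_def using ik by (simp add: of_nat_diff)
  have le: "k ^ Suc l \<le> k ^ n" if "l < m" for l using ik that n by (intro power_increasing) auto
  have "real (edge_sum k n i) = real k ^ m * real k ^ m * (2 * 2 ^ m * (real k - 1) + 2 * c)
    + (\<Sum>l<m. real k ^ (m - Suc l) * ((real k - 2) * (real k ^ l * real k ^ l * (2 * 2 ^ l * (real k - 1) + 2 * c))
         + 2 * (real k * real k ^ m - real k * real k ^ l) * (real k ^ l * ((real k - 2) * 2 ^ l + 2 * c))))"
    unfolding edge_sum_eq[OF ik n] of_nat_add of_nat_sum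
    using ik le n c by (simp add: of_nat_diff)
  also have "\<dots> = edge_base k m + c * edge_weight k m"
    by (rule sum_edge_cycles_closed_form) (use ik in simp)
  finally show ?thesis unfolding c_def .
qed

lemma sum_lessThan_triangle:
  "(\<Sum>i<N. real i * (real N - 1 - real i)) = real N * (real N - 1) * (real N - 2) / 6"
proof (induction N)
  case (Suc N)
  have "(\<Sum>i<Suc N. real i * (real (Suc N) - 1 - real i)) = (\<Sum>i<N. real i * (real N - 1 - real i) + real i)"
    by (simp add: algebra_simps)
  also have "\<dots> = real N * (real N - 1) * (real N - 2) / 6 + real N * (real N - 1) / 2"
  proof -
    have "(\<Sum>i<N. real i) = real N * (real N - 1) / 2"
      by (induction N) (simp_all add: field_simps)
    then show ?thesis by (simp add: sum.distrib Suc.IH)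
  qed
  finally show ?case by (simp add: field_simps)
qed simp

lemma real_sum_cactus_dist:
  assumes k: "2 \<le> k" and n: "n = Suc m"
  shows "real (\<Sum>u\<in>words {0..<k} n. \<Sum>w\<in>words {0..<k} n. cactus_dist k n u w)
    = (real k - 1) * edge_base k m + (real k - 1) * (real k - 2) * (real k - 3) / 6 * edge_weight k m"
proof -
  have "real (\<Sum>u\<in>words {0..<k} n. \<Sum>w\<in>words {0..<k} n. cactus_dist k n u w)
      = (\<Sum>i<k - 1. edge_base k m + (real i * (real k - 2 - real i)) * edge_weight k m)"
    unfolding sum_cactus_dist_edges of_nat_sum using edge_sum_closed_form[OF _ n] by (intro sum.cong) auto
  also have "\<dots> = real (k - 1) * edge_base k m + (\<Sum>i<k - 1. real i * (real k - 2 - real i)) * edge_weight k m"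
    by (simp add: sum.distrib sum_distrib_right)
  also have "(\<Sum>i<k - 1. real i * (real k - 2 - real i)) = (\<Sum>i<k - 1. real i * (real (k - 1) - 1 - real i))"
    using k by (simp add: of_nat_diff)
  also have "\<dots> = (real k - 1) * (real k - 2) * (real k - 3) / 6"
    unfolding sum_lessThan_triangle using k by (simp add: of_nat_diff algebra_simps)
  also have "real (k - 1) = real k - 1" using k by (simp add: of_nat_diff)
  finally show ?thesis .
qed

lemma wiener_rational_identity:
  fixes K X Y G H :: real and m :: nat
  assumes K: "2 \<le> K" and G: "G * (2 * K - 1) = X * Y - 1" and H: "H * (K - 1) = Y - 1"
  shows "((K - 1) * (2 * X * Y * Y * (K - 1) + 2 * (K - 2) * (Y * Y * (X - 1) - Y / K * G))
        + (K - 1) * (K - 2) * (K - 3) / 6 * (2 * Y * Y + 4 * real m * Y * Y - (2 * K + 4) * (Y / K) * H)) / 2 =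
      (K - 1)^2 * (2 * K^2 - 2 * K - 1) / (K^3 * (2 * K - 1)) * (2 * X) * (K^2 * Y^2)
    + (K - 1) * (K - 2) * (K - 3) / (3 * K^2) * (real m + 1) * (K^2 * Y^2)
    - (K + 1) * (K - 2) * (K^2 + 2 * K - 6) / (6 * K^3) * (K^2 * Y^2)
    + (K + 1) * (K - 2) * (2 * K - 5) / (6 * K * (2 * K - 1)) * (K * Y)"
    (is "?lhs = ?t1 + ?t2 - ?t3 + ?t4")
proof -
  have nz: "K \<noteq> 0" "2 * K - 1 \<noteq> 0" using K by auto
  define Z where "Z = 12 * K ^ 3 * (2 * K - 1)"
  have "Z * ?lhs = K^2 * (2 * K - 1) * (6 * (K - 1) * (2 * X * Y * Y * (K - 1) * K + 2 * (K - 2) * (Y * Y * (X - 1) * K - Y * G))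
      + (K - 1) * (K - 2) * (K - 3) * (2 * Y * Y * K + 4 * real m * Y * Y * K - (2 * K + 4) * Y * H))"
    unfolding Z_def using nz by (simp add: field_simps power2_eq_square power3_eq_cube)
  moreover have "Z * ?t1 = 24 * (K - 1)^2 * (2 * K^2 - 2 * K - 1) * X * K^2 * Y^2"
    unfolding Z_def using nz by (simp add: field_simps)
  moreover have "Z * ?t2 = 4 * (K - 1) * (K - 2) * (K - 3) * (real m + 1) * K^3 * (2 * K - 1) * Y^2"
    unfolding Z_def using nz by (simp add: field_simps power2_eq_square power3_eq_cube)
  moreover have "Z * ?t3 = 2 * (K + 1) * (K - 2) * (K^2 + 2 * K - 6) * K^2 * (2 * K - 1) * Y^2"
    unfolding Z_def using nz by (simp add: field_simps eval_nat_numeral)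
  moreover have "Z * ?t4 = 2 * (K + 1) * (K - 2) * (2 * K - 5) * K^3 * Y"
    unfolding Z_def using nz by (simp add: field_simps power2_eq_square power3_eq_cube)
  ultimately have "Z * ?lhs = Z * ?t1 + Z * ?t2 - Z * ?t3 + Z * ?t4"
    using G H by algebra
  then have "Z * ?lhs = Z * (?t1 + ?t2 - ?t3 + ?t4)"
    by (simp only: distrib_left right_diff_distrib)
  moreover have "Z \<noteq> 0" unfolding Z_def using nz by simp
  ultimately show ?thesis by (rule mult_left_cancel[THEN iffD1, rotated])
qed

lemma wiener_identity:
  fixes K :: real
  assumes K: "2 \<le> K"
  shows "((K - 1) * edge_base K m + (K - 1) * (K - 2) * (K - 3) / 6 * edge_weight K m) / 2 =
      (K - 1)^2 * (2 * K^2 - 2 * K - 1) / (K^3 * (2 * K - 1)) * 2 ^ Suc m * K ^ (2 * Suc m)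
    + (K - 1) * (K - 2) * (K - 3) / (3 * K^2) * real (Suc m) * K ^ (2 * Suc m)
    - (K + 1) * (K - 2) * (K^2 + 2 * K - 6) / (6 * K^3) * K ^ (2 * Suc m)
    + (K + 1) * (K - 2) * (2 * K - 5) / (6 * K * (2 * K - 1)) * K ^ Suc m"
proof -
  define X where "X = (2::real) ^ m"
  define Y where "Y = K ^ m"
  have G: "(\<Sum>l<m. (2 * K) ^ l) * (2 * K - 1) = X * Y - 1"
    using geometric_sum[of "2 * K" m] K unfolding X_def Y_def by (simp add: power_mult_distrib)
  have H: "(\<Sum>l<m. K ^ l) * (K - 1) = Y - 1"
    using geometric_sum[of K m] K unfolding Y_def by simp
  have pw: "(2::real) ^ Suc m = 2 * X" "K ^ (2 * Suc m) = K\<^sup>2 * Y\<^sup>2" "K ^ Suc m = K * Y"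
    "real (Suc m) = real m + 1"
    unfolding X_def Y_def by (simp_all add: power_mult power_mult_distrib power2_eq_square)
  show ?thesis
    unfolding edge_base_def edge_weight_def pw X_def[symmetric] Y_def[symmetric]
    by (rule wiener_rational_identity[OF K G H])
qed

theorem corollary5p8:
  fixes k n :: nat and orient :: "nat \<Rightarrow> bool"
  assumes "k \<ge> 1" and "n \<ge> 1"
  shows "wiener (words {0..<k} n) (schreier_adj {0..<k} (path_edges k orient) n) =
      (real k - 1)^2 * (2 * (real k)^2 - 2 * real k - 1) / ((real k)^3 * (2 * real k - 1))
        * 2^n * (real k)^(2*n)
    + (real k - 1) * (real k - 2) * (real k - 3) / (3 * (real k)^2) * real n * (real k)^(2*n)
    - (real k + 1) * (real k - 2) * ((real k)^2 + 2 * real k - 6) / (6 * (real k)^3) * (real k)^(2*n)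
    + (real k + 1) * (real k - 2) * (2 * real k - 5) / (6 * real k * (2 * real k - 1)) * (real k)^n"
proof (cases "k = 1")
  case True
  then show ?thesis unfolding wiener_eq_sum_cactus_dist sum_cactus_dist_edges by simp
next
  case False
  then have k: "2 \<le> k" using assms(1) by simp
  obtain m where n: "n = Suc m" using assms(2) by (cases n) auto
  show ?thesis
    unfolding wiener_eq_sum_cactus_dist n real_sum_cactus_dist[OF k n, unfolded n]
    by (rule wiener_identity) (use k in simp)
qed

end
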